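(* In the setting of the context, assume $G_{xy}^{[1]}=1$, $G_x/G_x^{[1]}\cong S_5$ and $G_x^{[1]}\cong A_4$. Then $G_x\cong S_5\boxtimes S_4$.
   Context: $\mathcal{A}=(G_x,G_e,G_{xy})$ is a finite, primitive amalgam of degree $(5,2)$ (no nontrivial subgroup of $G_{xy}$ normal in both $G_x$ and $G_e$; $|G_x:G_{xy}|=5$, $|G_e:G_{xy}|=2$), $G=G_x*_{G_{xy}}G_e$ acts on the coset graph (5-valent tree) $\Gamma$, $x$ is the vertex with stabiliser $G_x$, $y$ the neighbour with $G_e$ the setwise stabiliser of $\{x,y\}$ and $G_x\cap G_y=G_{xy}$. $G_z^{[1]}$ is the pointwise stabiliser of $z$ and its neighbours, $G_{xy}^{[1]}=G_x^{[1]}\cap G_y^{[1]}$. $S_n\boxtimes S_m=\{(g,h)\in S_n\times S_m:\operatorname{sgn}g=\operatorname{sgn}h\}$, the index-2 subgroup of $S_n\times S_m$ with no direct factor isomorphic to $S_n$ or $S_m$. *)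

theory Defs
  imports "HOL-Algebra.Algebra" "HOL-Algebra.Sym_Groups"
begin

definition conj_set :: "('a, 'b) monoid_scheme \<Rightarrow> 'a \<Rightarrow> 'a set \<Rightarrow> 'a set" where
  "conj_set U g H = (g <#\<^bsub>U\<^esub> H) #>\<^bsub>U\<^esub> inv\<^bsub>U\<^esub> g"

(* Normal core of H in S: the kernel of the action of S on the cosets of H.
   For S = G_z the stabiliser of a vertex z and H = G_{xy}-type edge stabiliser,
   the neighbours of z correspond to the cosets of H in S, so this is G_z^{[1]}. *)
definition normal_core :: "('a, 'b) monoid_scheme \<Rightarrow> 'a set \<Rightarrow> 'a set \<Rightarrow> 'a set" where
  "normal_core U S H = (\<Inter>g\<in>S. conj_set U g H)"

(* A finite amalgam (G_x, G_e, G_xy) of degree (5,2), realised inside some ambient group U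
   (e.g. the free amalgamated product G = G_x *_{G_xy} G_e), with G_x \<inter> G_e = G_xy. *)
definition amalgam_5_2 :: "('a, 'b) monoid_scheme \<Rightarrow> 'a set \<Rightarrow> 'a set \<Rightarrow> 'a set \<Rightarrow> bool" where
  "amalgam_5_2 U Gx Ge Gxy \<longleftrightarrow>
     group U \<and> subgroup Gx U \<and> subgroup Ge U \<and> Gx \<inter> Ge = Gxy \<and>
     finite Gx \<and> finite Ge \<and>
     card (rcosets\<^bsub>U\<lparr>carrier := Gx\<rparr>\<^esub> Gxy) = 5 \<and>
     card (rcosets\<^bsub>U\<lparr>carrier := Ge\<rparr>\<^esub> Gxy) = 2"

definition primitive_amalgam :: "('a, 'b) monoid_scheme \<Rightarrow> 'a set \<Rightarrow> 'a set \<Rightarrow> 'a set \<Rightarrow> bool" where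
  "primitive_amalgam U Gx Ge Gxy \<longleftrightarrow>
     (\<forall>N. N \<subseteq> Gxy \<and> N \<lhd> U\<lparr>carrier := Gx\<rparr> \<and> N \<lhd> U\<lparr>carrier := Ge\<rparr> \<longrightarrow> N = {\<one>\<^bsub>U\<^esub>})"

definition vertex_kernel :: "('a, 'b) monoid_scheme \<Rightarrow> 'a set \<Rightarrow> 'a set \<Rightarrow> 'a set" where
  "vertex_kernel U Gx Gxy = normal_core U Gx Gxy"

(* G_y = t G_x t^{-1} for t \<in> G_e \ G_xy (t maps x to its neighbour y, t swaps x and y) *)
definition stab_y :: "('a, 'b) monoid_scheme \<Rightarrow> 'a set \<Rightarrow> 'a set \<Rightarrow> 'a set \<Rightarrow> 'a set" where
  "stab_y U Gx Ge Gxy = conj_set U (SOME t. t \<in> Ge - Gxy) Gx"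

(* G_xy^{[1]} = G_x^{[1]} \<inter> G_y^{[1]}, where G_y^{[1]} is the kernel of G_y on the
   neighbours of y, i.e. the normal core of G_xy = G_x \<inter> G_y in G_y *)
definition edge_kernel :: "('a, 'b) monoid_scheme \<Rightarrow> 'a set \<Rightarrow> 'a set \<Rightarrow> 'a set \<Rightarrow> 'a set" where
  "edge_kernel U Gx Ge Gxy = vertex_kernel U Gx Gxy \<inter> normal_core U (stab_y U Gx Ge Gxy) Gxy"

definition box_prod :: "nat \<Rightarrow> nat \<Rightarrow> ((nat \<Rightarrow> nat) \<times> (nat \<Rightarrow> nat)) monoid" where
  "box_prod n m = (sym_group n \<times>\<times> sym_group m)\<lparr> carrier :=
      {(g, h). g permutes {1..n} \<and> h permutes {1..m} \<and> sign g = sign h} \<rparr>"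

end

theory Submission
  imports Defs
begin

text \<open>
  \<open>G\<^sub>x\<close> permutes the five neighbours of \<open>x\<close> (the cosets of \<open>G\<^sub>x\<^sub>y\<close>) with kernel
  \<open>K = G\<^sub>x\<^sup>[\<^sup>1\<^sup>] \<cong> A\<^sub>4\<close>, and permutes the four Sylow 3-subgroups of \<open>K\<close> by conjugation.
  The resulting map \<open>G\<^sub>x \<rightarrow> S\<^sub>5 \<times> S\<^sub>4\<close> is injective, because \<open>K\<close> acts faithfully on its
  Sylow 3-subgroups, and \<open>|G\<^sub>x| = 120 \<cdot> 12 = |S\<^sub>5 \<boxtimes> S\<^sub>4|\<close>; so it remains to see that the two
  components of every element have the same sign. If some element of \<open>G\<^sub>x\<close> acts oddly on
  the Sylow subgroups, the kernel \<open>C\<close> of that action has order 60 and embeds into \<open>S\<^sub>5\<close>,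
  hence is mapped onto \<open>A\<^sub>5\<close>, and the signs agree. Otherwise \<open>G\<^sub>x = K C\<close>; conjugating by an
  element \<open>t\<close> that swaps \<open>x\<close> with its neighbour \<open>y\<close> and using \<open>G\<^sub>x\<^sub>y\<^sup>[\<^sup>1\<^sup>] = 1\<close>, one finds an
  element of order two in \<open>C \<inter> G\<^sub>x\<^sub>y\<close> that is central in \<open>G\<^sub>x\<^sub>y\<close>. It would act on the
  neighbours as a nontrivial permutation centralising the point stabiliser \<open>S\<^sub>4 \<le> S\<^sub>5\<close>,
  which is impossible.
\<close>

lemma permutes_interval_permutation: "\<sigma> permutes {1..n::nat} \<Longrightarrow> permutation \<sigma>"
  by (rule permutes_imp_permutation) simp_all

lemma permutes_comp_cancel_left:
  assumes "x permutes S" "x \<circ> a = x \<circ> b" shows "a = b"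
proof
  fix z
  have "x (a z) = x (b z)" using assms(2) by (metis comp_apply)
  then show "a z = b z" by (rule injD[OF permutes_inj[OF assms(1)]])
qed

lemma permutes_comp_cancel_right:
  assumes "y permutes S" "a \<circ> y = b \<circ> y" shows "a = b"
proof
  fix z
  obtain w where "y w = z" using permutes_surj[OF assms(1)] by (metis surjD)
  then show "a z = b z" using assms(2) by (metis comp_apply)
qed

lemma evenperm_conj:
  "permutation \<tau> \<Longrightarrow> permutation \<sigma> \<Longrightarrow> evenperm (\<tau> \<circ> \<sigma> \<circ> inv' \<tau>) = evenperm \<sigma>"
  by (auto simp add: evenperm_comp evenperm_inv permutation_compose permutation_inverse)

lemma inj_conj_perm:
  assumes "\<tau> permutes S"
  shows "inj (\<lambda>\<sigma>. \<tau> \<circ> \<sigma> \<circ> inv' \<tau>)"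
proof (rule injI)
  fix a b assume "\<tau> \<circ> a \<circ> inv' \<tau> = \<tau> \<circ> b \<circ> inv' \<tau>"
  then have "(\<tau> \<circ> a \<circ> inv' \<tau>) \<circ> \<tau> = (\<tau> \<circ> b \<circ> inv' \<tau>) \<circ> \<tau>" by simp
  then have "\<tau> \<circ> a = \<tau> \<circ> b" by (simp add: comp_assoc permutes_inv_o[OF assms])
  then show "a = b" by (rule permutes_comp_cancel_left[OF assms])
qed

lemma perm4_cube_id_has_fixpoint:
  assumes s: "\<sigma> permutes {1..4::nat}" and cube: "\<And>x. \<sigma> (\<sigma> (\<sigma> x)) = x"
  shows "\<exists>i\<in>{1..4}. \<sigma> i = i"
proof (rule ccontr)
  assume "\<not> ?thesis"
  then have nf: "\<And>i. i \<in> {1..4} \<Longrightarrow> \<sigma> i \<noteq> i" by blast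
  have inS: "\<And>x. x \<in> {1..4} \<Longrightarrow> \<sigma> x \<in> {1..4}" using permutes_in_image[OF s] by metis
  have inj: "\<And>x y. \<sigma> x = \<sigma> y \<Longrightarrow> x = y" using s by (metis permutes_inj injD)
  define a where "a = \<sigma> 1"
  define b where "b = \<sigma> a"
  have a4: "a \<in> {1..4}" and b4: "b \<in> {1..4}" using inS a_def b_def by auto
  have ab: "a \<noteq> 1" "b \<noteq> a" "\<sigma> b = 1" using nf[of 1] nf[OF a4] cube[of 1] a_def b_def by auto
  have "b \<noteq> 1" using ab(3) nf[OF b4] by auto
  obtain d where d4: "d \<in> {1..4}" and d: "d \<noteq> 1" "d \<noteq> a" "d \<noteq> b"
     and all: "\<And>x. x \<in> {1..4} \<Longrightarrow> x = 1 \<or> x = a \<or> x = b \<or> x = d"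
  proof -
    have "a = 2 \<or> a = 3 \<or> a = 4" "b = 2 \<or> b = 3 \<or> b = 4" using a4 b4 ab \<open>b \<noteq> 1\<close> by auto
    moreover have "{1..4::nat} = {1,2,3,4}" by auto
    ultimately have "\<exists>d\<in>{1..4::nat}. d \<noteq> 1 \<and> d \<noteq> a \<and> d \<noteq> b \<and> (\<forall>x\<in>{1..4}. x = 1 \<or> x = a \<or> x = b \<or> x = d)"
      using ab(2) by (elim disjE) simp_all
    then show ?thesis using that by blast
  qed
  have "\<sigma> d \<in> {1..4}" "\<sigma> d \<noteq> d" using inS nf d4 by auto
  moreover have "\<sigma> d \<noteq> 1" "\<sigma> d \<noteq> a" "\<sigma> d \<noteq> b" using ab(3) a_def b_def d inj by metis+
  ultimately show False using all by blast
qed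

definition alt_point_stab :: "nat \<Rightarrow> nat \<Rightarrow> (nat \<Rightarrow> nat) set" where
  "alt_point_stab n i = {\<sigma>. \<sigma> permutes {1..n} \<and> evenperm \<sigma> \<and> \<sigma> i = i}"

lemma mem_alt_point_stab: "\<sigma> \<in> alt_point_stab n i \<longleftrightarrow> \<sigma> permutes {1..n} \<and> evenperm \<sigma> \<and> \<sigma> i = i"
  by (simp add: alt_point_stab_def)

lemma alt_point_stab_subset: "alt_point_stab n i \<subseteq> carrier (alt_group n)"
  by (auto simp: mem_alt_point_stab alt_group_carrier)

lemma finite_alt_point_stab: "finite (alt_point_stab n i)"
  by (rule finite_subset[OF _ finite_permutations[of "{1..n}"]]) (auto simp: mem_alt_point_stab)

lemma id_mem_alt_point_stab: "id \<in> alt_point_stab n i"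
  by (simp add: mem_alt_point_stab permutes_id)

lemma alt_point_stab_comp:
  "\<sigma> \<in> alt_point_stab n i \<Longrightarrow> \<tau> \<in> alt_point_stab n i \<Longrightarrow> \<sigma> \<circ> \<tau> \<in> alt_point_stab n i"
  by (auto simp: mem_alt_point_stab evenperm_comp permutes_interval_permutation
      intro: permutes_compose)

lemma alt_point_stab_conj:
  assumes t: "\<tau> permutes {1..n}"
  shows "(\<lambda>\<sigma>. \<tau> \<circ> \<sigma> \<circ> inv' \<tau>) ` alt_point_stab n i = alt_point_stab n (\<tau> i)"
proof
  have pt: "permutation \<tau>" using permutes_interval_permutation[OF t] .
  show "(\<lambda>\<sigma>. \<tau> \<circ> \<sigma> \<circ> inv' \<tau>) ` alt_point_stab n i \<subseteq> alt_point_stab n (\<tau> i)"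
  proof
    fix \<rho> assume "\<rho> \<in> (\<lambda>\<sigma>. \<tau> \<circ> \<sigma> \<circ> inv' \<tau>) ` alt_point_stab n i"
    then obtain \<sigma> where s: "\<sigma> permutes {1..n}" "evenperm \<sigma>" "\<sigma> i = i"
      and r: "\<rho> = \<tau> \<circ> \<sigma> \<circ> inv' \<tau>"
      by (auto simp: mem_alt_point_stab)
    have "\<rho> permutes {1..n}" unfolding r by (intro permutes_compose permutes_inv t s)
    moreover have "evenperm \<rho>"
      unfolding r using evenperm_conj[OF pt permutes_interval_permutation[OF s(1)]] s by simp
    moreover have "\<rho> (\<tau> i) = \<tau> i" unfolding r using s(3) permutes_inverses(2)[OF t] by simp
    ultimately show "\<rho> \<in> alt_point_stab n (\<tau> i)" by (simp add: mem_alt_point_stab)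
  qed
  show "alt_point_stab n (\<tau> i) \<subseteq> (\<lambda>\<sigma>. \<tau> \<circ> \<sigma> \<circ> inv' \<tau>) ` alt_point_stab n i"
  proof
    fix \<rho> assume "\<rho> \<in> alt_point_stab n (\<tau> i)"
    then have s: "\<rho> permutes {1..n}" "evenperm \<rho>" "\<rho> (\<tau> i) = \<tau> i" by (auto simp: mem_alt_point_stab)
    define \<sigma> where "\<sigma> = inv' \<tau> \<circ> \<rho> \<circ> \<tau>"
    have it: "inv' \<tau> permutes {1..n}" using permutes_inv[OF t] .
    have "\<sigma> permutes {1..n}" unfolding \<sigma>_def by (intro permutes_compose t s it)
    moreover have "evenperm \<sigma>" unfolding \<sigma>_def
      using evenperm_conj[OF permutes_interval_permutation[OF it] permutes_interval_permutation[OF s(1)]] s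
      by (simp add: permutes_inv_inv[OF t])
    moreover have "\<sigma> i = i" unfolding \<sigma>_def using s(3) permutes_inverses[OF t] by simp
    moreover have "\<rho> = \<tau> \<circ> \<sigma> \<circ> inv' \<tau>"
      unfolding \<sigma>_def by (simp add: fun_eq_iff permutes_inverses[OF t])
    ultimately show "\<rho> \<in> (\<lambda>\<sigma>. \<tau> \<circ> \<sigma> \<circ> inv' \<tau>) ` alt_point_stab n i"
      by (auto simp: mem_alt_point_stab)
  qed
qed

lemma alt_point_stab_last: "alt_point_stab (Suc n) (Suc n) = carrier (alt_group n)"
proof -
  have "\<sigma> permutes {1..Suc n} \<and> \<sigma> (Suc n) = Suc n \<longleftrightarrow> \<sigma> permutes {1..n}" for \<sigma>
  proof
    assume a: "\<sigma> permutes {1..Suc n} \<and> \<sigma> (Suc n) = Suc n"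
    show "\<sigma> permutes {1..n}"
    proof (rule permutes_superset[OF conjunct1[OF a]])
      fix x assume "x \<in> {1..Suc n} - {1..n}"
      then have "x = Suc n" by auto
      then show "\<sigma> x = x" using a by simp
    qed
  next
    assume a: "\<sigma> permutes {1..n}"
    show "\<sigma> permutes {1..Suc n} \<and> \<sigma> (Suc n) = Suc n"
      using permutes_subset[OF a] permutes_not_in[OF a] by auto
  qed
  then show ?thesis unfolding set_eq_iff mem_alt_point_stab alt_group_carrier by blast
qed

lemma card_alt_point_stab:
  assumes "3 \<le> n" "i \<in> {1..n}"
  shows "2 * card (alt_point_stab n i) = fact (n - 1)"
proof -
  have t: "transpose n i permutes {1..n}" using assms by (intro permutes_swap_id) auto
  have "alt_point_stab n i = (\<lambda>\<sigma>. transpose n i \<circ> \<sigma> \<circ> inv' (transpose n i)) ` alt_point_stab n n"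
    using alt_point_stab_conj[OF t, of n] by simp
  then have "card (alt_point_stab n i) = card (alt_point_stab n n)"
    using card_image[OF inj_on_subset[OF inj_conj_perm[OF t] subset_UNIV]] by simp
  also have "alt_point_stab n n = carrier (alt_group (n - 1))"
    using alt_point_stab_last[of "n - 1"] assms(1) by simp
  finally show ?thesis using alt_group_card_carrier[of "n - 1"] assms(1) by simp
qed

lemma alt_point_stab_inj:
  assumes "4 \<le> n" "i \<in> {1..n}" "j \<in> {1..n}" "alt_point_stab n i = alt_point_stab n j"
  shows "i = j"
proof (rule ccontr)
  assume ij: "i \<noteq> j"
  have "card ({1..n} - {i, j}) = Suc (n - 3)" using assms ij by (subst card_Diff_subset) auto
  then obtain k B where kB: "{1..n} - {i, j} = insert k B" "k \<notin> B" "card B = n - 3"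
    using card_eq_SucD by blast
  have "B \<noteq> {}" using kB(3) assms(1) by auto
  then obtain l where "l \<in> B" by blast
  then have kl: "k \<in> {1..n} - {i, j}" "l \<in> {1..n} - {i, j}" "k \<noteq> l" using kB by auto
  define \<sigma> where "\<sigma> = transpose j k \<circ> transpose k l"
  have "\<sigma> permutes {1..n}" unfolding \<sigma>_def
    by (intro permutes_compose permutes_swap_id) (use kl assms(3) in auto)
  moreover have "evenperm \<sigma>" unfolding \<sigma>_def
    using kl by (simp add: evenperm_comp evenperm_swap permutation_swap_id eq_commute[of j k])
  moreover have "\<sigma> i = i" "\<sigma> j \<noteq> j" unfolding \<sigma>_def using kl ij by (auto simp: transpose_def)
  ultimately show False using assms(4) by (auto simp: mem_alt_point_stab)
qed

definition conjugate :: "('a, 'b) monoid_scheme \<Rightarrow> 'a \<Rightarrow> 'a \<Rightarrow> 'a" where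
  "conjugate G g x = g \<otimes>\<^bsub>G\<^esub> x \<otimes>\<^bsub>G\<^esub> inv\<^bsub>G\<^esub> g"

context group
begin

lemma inv_mult_cancel_left [simp]: "g \<in> carrier G \<Longrightarrow> z \<in> carrier G \<Longrightarrow> inv g \<otimes> (g \<otimes> z) = z"
  by (simp add: m_assoc[symmetric])

lemma mult_inv_cancel_left [simp]: "g \<in> carrier G \<Longrightarrow> z \<in> carrier G \<Longrightarrow> g \<otimes> (inv g \<otimes> z) = z"
  by (simp add: m_assoc[symmetric])

lemma conjugate_closed [simp]: "g \<in> carrier G \<Longrightarrow> x \<in> carrier G \<Longrightarrow> conjugate G g x \<in> carrier G"
  by (simp add: conjugate_def)

lemma conjugate_mult:
  "g \<in> carrier G \<Longrightarrow> x \<in> carrier G \<Longrightarrow> y \<in> carrier G \<Longrightarrow>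
   conjugate G g (x \<otimes> y) = conjugate G g x \<otimes> conjugate G g y"
  by (simp add: conjugate_def m_assoc)

lemma conjugate_inv:
  "g \<in> carrier G \<Longrightarrow> x \<in> carrier G \<Longrightarrow> conjugate G g (inv x) = inv (conjugate G g x)"
  by (simp add: conjugate_def m_assoc inv_mult_group)

lemma conjugate_comp:
  "g \<in> carrier G \<Longrightarrow> h \<in> carrier G \<Longrightarrow> x \<in> carrier G \<Longrightarrow>
   conjugate G (g \<otimes> h) x = conjugate G g (conjugate G h x)"
  by (simp add: conjugate_def m_assoc inv_mult_group)

lemma conjugate_by_one [simp]: "x \<in> carrier G \<Longrightarrow> conjugate G \<one> x = x"
  by (simp add: conjugate_def)

lemma conjugate_one [simp]: "g \<in> carrier G \<Longrightarrow> conjugate G g \<one> = \<one>"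
  by (simp add: conjugate_def)

lemma conjugate_inv_conjugate [simp]:
  "g \<in> carrier G \<Longrightarrow> x \<in> carrier G \<Longrightarrow> conjugate G (inv g) (conjugate G g x) = x"
  using conjugate_comp[of "inv g" g x] by simp

lemma conjugate_conjugate_inv [simp]:
  "g \<in> carrier G \<Longrightarrow> x \<in> carrier G \<Longrightarrow> conjugate G g (conjugate G (inv g) x) = x"
  using conjugate_comp[of g "inv g" x] by simp

lemma conjugate_conjugate:
  "g \<in> carrier G \<Longrightarrow> p \<in> carrier G \<Longrightarrow> x \<in> carrier G \<Longrightarrow>
   conjugate G g (conjugate G p x) = conjugate G (conjugate G g p) (conjugate G g x)"
  by (simp add: conjugate_def m_assoc inv_mult_group)

lemma conjugate_eq_self_iff:
  assumes "g \<in> carrier G" "x \<in> carrier G"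
  shows "conjugate G g x = x \<longleftrightarrow> g \<otimes> x = x \<otimes> g"
proof -
  have "conjugate G g x = x \<longleftrightarrow> conjugate G g x \<otimes> g = x \<otimes> g"
    using assms by (metis conjugate_closed r_cancel)
  also have "conjugate G g x \<otimes> g = g \<otimes> x" using assms by (simp add: conjugate_def m_assoc)
  finally show ?thesis .
qed

lemma conjugate_inj:
  "g \<in> carrier G \<Longrightarrow> x \<in> carrier G \<Longrightarrow> y \<in> carrier G \<Longrightarrow> conjugate G g x = conjugate G g y \<Longrightarrow> x = y"
  by (metis conjugate_inv_conjugate)

lemma conjugate_commute:
  "g \<in> carrier G \<Longrightarrow> x \<in> carrier G \<Longrightarrow> y \<in> carrier G \<Longrightarrow> x \<otimes> y = y \<otimes> x \<Longrightarrow>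
   conjugate G g x \<otimes> conjugate G g y = conjugate G g y \<otimes> conjugate G g x"
  by (simp add: conjugate_mult[symmetric])

lemma commute_mult:
  assumes "e \<in> carrier G" "a \<in> carrier G" "b \<in> carrier G" "e \<otimes> a = a \<otimes> e" "e \<otimes> b = b \<otimes> e"
  shows "e \<otimes> (a \<otimes> b) = (a \<otimes> b) \<otimes> e"
proof -
  have "e \<otimes> (a \<otimes> b) = (a \<otimes> e) \<otimes> b" using assms by (simp add: m_assoc[symmetric])
  also have "\<dots> = (a \<otimes> b) \<otimes> e" using assms by (simp add: m_assoc)
  finally show ?thesis .
qed

lemma mem_conj_set_iff:
  assumes g: "g \<in> carrier G" and Y: "Y \<subseteq> carrier G"
  shows "y \<in> conj_set G g Y \<longleftrightarrow> y \<in> carrier G \<and> conjugate G (inv g) y \<in> Y"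
proof
  assume "y \<in> conj_set G g Y"
  then obtain p where p: "p \<in> Y" "y = g \<otimes> p \<otimes> inv g"
    unfolding conj_set_def l_coset_def r_coset_def by blast
  then have "y = conjugate G g p" by (simp add: conjugate_def)
  then show "y \<in> carrier G \<and> conjugate G (inv g) y \<in> Y" using g Y p by auto
next
  assume y: "y \<in> carrier G \<and> conjugate G (inv g) y \<in> Y"
  define p where "p = conjugate G (inv g) y"
  have "y = g \<otimes> p \<otimes> inv g" using y g by (simp add: p_def conjugate_def[symmetric])
  moreover have "p \<in> Y" using y p_def by simp
  ultimately show "y \<in> conj_set G g Y" unfolding conj_set_def l_coset_def r_coset_def by blast
qed

lemma conjugate_preimage_subgroup:
  assumes "subgroup Y G" "g \<in> carrier G"
  shows "subgroup {x \<in> carrier G. conjugate G g x \<in> Y} G"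
proof (rule subgroupI)
  have "\<one> \<in> {x \<in> carrier G. conjugate G g x \<in> Y}"
    using assms subgroup.one_closed[OF assms(1)] by simp
  then show "{x \<in> carrier G. conjugate G g x \<in> Y} \<noteq> {}" by blast
qed (use assms in \<open>auto simp: conjugate_inv conjugate_mult subgroup.m_inv_closed subgroup.m_closed\<close>)

lemma rcos_eq_iff:
  assumes "subgroup H G" "a \<in> carrier G" "b \<in> carrier G"
  shows "H #> a = H #> b \<longleftrightarrow> a \<otimes> inv b \<in> H"
proof
  assume "H #> a = H #> b"
  then have "a \<in> H #> b" using rcos_self[OF assms(2,1)] by simp
  then show "a \<otimes> inv b \<in> H" using subgroup.rcos_module_imp[OF assms(1) is_group assms(3)] by blast
next
  assume "a \<otimes> inv b \<in> H"
  then have "a \<in> H #> b" using subgroup.rcos_module_rev[OF assms(1) is_group assms(3,2)] by blast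
  then show "H #> a = H #> b" using repr_independence[OF _ assms(3,1)] by simp
qed

lemma index_two_square_mem:
  assumes Y: "subgroup Y G" and c2: "card (rcosets Y) = 2" and fin: "finite (carrier G)"
    and g: "g \<in> carrier G"
  shows "g \<otimes> g \<in> Y"
proof (rule ccontr)
  assume ngg: "g \<otimes> g \<notin> Y"
  have gg: "g \<otimes> g \<in> carrier G" using g by simp
  have ng: "g \<notin> Y" using ngg g subgroup.m_closed[OF Y] by blast
  have "inv g \<notin> Y" "inv (g \<otimes> g) \<notin> Y"
    using ng ngg g gg by (auto dest: subgroup.m_inv_closed[OF Y])
  then have "Y #> \<one> \<noteq> Y #> g" "Y #> \<one> \<noteq> Y #> (g \<otimes> g)"
    using rcos_eq_iff[OF Y one_closed g] rcos_eq_iff[OF Y one_closed gg] g gg by simp_all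
  moreover have "(g \<otimes> g) \<otimes> inv g = g" using g by (simp add: m_assoc)
  then have "Y #> (g \<otimes> g) \<noteq> Y #> g" using rcos_eq_iff[OF Y gg g] ng by simp
  ultimately have three: "card {Y #> \<one>, Y #> g, Y #> (g \<otimes> g)} = 3" by auto
  have "{Y #> \<one>, Y #> g, Y #> (g \<otimes> g)} \<subseteq> rcosets Y"
    using rcosetsI[OF subgroup.subset[OF Y]] g gg by auto
  moreover have "finite (rcosets Y)" using finite_subset[OF rcosets_subset_PowG[OF Y]] fin by blast
  ultimately have "card {Y #> \<one>, Y #> g, Y #> (g \<otimes> g)} \<le> card (rcosets Y)" by (rule card_mono[rotated])
  then show False using three c2 by simp
qed

lemma card_mult_of_trivial_Int:
  assumes A: "subgroup A G" and B: "subgroup B G" and AB: "A \<inter> B = {\<one>}"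
    and fA: "finite A" and fB: "finite B"
  shows "card {a \<otimes> b | a b. a \<in> A \<and> b \<in> B} = card A * card B"
proof -
  have eq: "{a \<otimes> b | a b. a \<in> A \<and> b \<in> B} = (\<lambda>(a, b). a \<otimes> b) ` (A \<times> B)" by auto
  have "inj_on (\<lambda>(a, b). a \<otimes> b) (A \<times> B)"
  proof (rule inj_onI, clarify)
    fix a b a' b' assume ab: "a \<in> A" "b \<in> B" "a' \<in> A" "b' \<in> B" "a \<otimes> b = a' \<otimes> b'"
    have c: "a \<in> carrier G" "b \<in> carrier G" "a' \<in> carrier G" "b' \<in> carrier G"
      using ab A B subgroup.subset by blast+
    have "inv a' \<otimes> a = b' \<otimes> inv b"
    proof -
      have "inv a' \<otimes> (a \<otimes> b) \<otimes> inv b = inv a' \<otimes> (a' \<otimes> b') \<otimes> inv b" using ab(5) by simp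
      then show ?thesis using c by (simp add: m_assoc)
    qed
    moreover have "inv a' \<otimes> a \<in> A" "b' \<otimes> inv b \<in> B"
      using A B ab by (simp_all add: subgroup.m_closed subgroup.m_inv_closed)
    ultimately have "inv a' \<otimes> a = \<one>" using AB by auto
    moreover have "a = a' \<otimes> (inv a' \<otimes> a)" using c by simp
    ultimately have "a = a'" using c by simp
    then show "a = a' \<and> b = b'" using ab(5) c l_cancel by blast
  qed
  then show ?thesis unfolding eq by (simp add: card_image card_cartesian_product)
qed

text \<open>\<open>g p g\<^sup>-\<^sup>1 = (g p)\<^sup>2 p\<^sup>-\<^sup>1 (g\<^sup>2)\<^sup>-\<^sup>1\<close>, and squares of \<open>Q\<close> lie in its index-two subgroup \<open>P\<close>.\<close>
lemma index_two_subgroup_conjugate_closed: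
  assumes P: "subgroup P G" and Q: "subgroup Q G" "P \<subseteq> Q" "finite Q"
    and index: "card (rcosets\<^bsub>G\<lparr>carrier := Q\<rparr>\<^esub> P) = 2"
    and g: "g \<in> Q" and p: "p \<in> P"
  shows "conjugate G g p \<in> P"
proof -
  interpret Q: group "G\<lparr>carrier := Q\<rparr>" by (rule subgroup_imp_group[OF Q(1)])
  have square: "x \<otimes> x \<in> P" if "x \<in> Q" for x
    using Q.index_two_square_mem[OF subgroup_incl[OF P Q(1,2)] index] Q(3) that by simp
  have gc: "g \<in> carrier G" and pc: "p \<in> carrier G" using g p Q(2) subgroup.subset[OF Q(1)] by auto
  have "conjugate G g p = ((g \<otimes> p) \<otimes> (g \<otimes> p)) \<otimes> inv p \<otimes> inv (g \<otimes> g)"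
    using gc pc by (simp add: conjugate_def m_assoc inv_mult_group)
  moreover have "(g \<otimes> p) \<otimes> (g \<otimes> p) \<in> P"
    using square subgroup.m_closed[OF Q(1) g] p Q(2) by blast
  ultimately show ?thesis
    using square[OF g] p subgroup.m_closed[OF P] subgroup.m_inv_closed[OF P] by simp
qed

lemma mem_normal_core_iff:
  assumes "S \<subseteq> carrier G" "Y \<subseteq> carrier G"
  shows "x \<in> normal_core G S Y \<longleftrightarrow> (\<forall>g\<in>S. x \<in> carrier G \<and> conjugate G (inv g) x \<in> Y)"
  unfolding normal_core_def using mem_conj_set_iff assms by blast

lemma normal_core_conj_set:
  assumes S: "subgroup S G" and Y: "Y \<subseteq> carrier G" and t: "t \<in> carrier G"
    and tY: "\<And>p. p \<in> Y \<Longrightarrow> conjugate G t p \<in> Y"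
    and x: "x \<in> normal_core G S Y" "conjugate G (inv t) x \<in> normal_core G S Y"
  shows "x \<in> normal_core G (conj_set G t S) Y"
proof -
  have Sc: "S \<subseteq> carrier G" using subgroup.subset[OF S] .
  have tSc: "conj_set G t S \<subseteq> carrier G" using mem_conj_set_iff[OF t Sc] by blast
  have xc: "x \<in> carrier G" using x(1) mem_normal_core_iff[OF Sc Y] subgroup.one_closed[OF S] by blast
  have "conjugate G (inv g) x \<in> Y" if g: "g \<in> conj_set G t S" for g
  proof -
    have gc: "g \<in> carrier G" and hS: "conjugate G (inv t) g \<in> S"
      using g mem_conj_set_iff[OF t Sc] by auto
    define h where "h = conjugate G (inv t) g"
    have hc: "h \<in> carrier G" unfolding h_def using gc t by simp
    have "inv g = conjugate G t (inv h)" unfolding h_def using gc t by (simp add: conjugate_inv)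
    then have "conjugate G (inv g) x
        = conjugate G (conjugate G t (inv h)) (conjugate G t (conjugate G (inv t) x))"
      using t xc by simp
    also have "\<dots> = conjugate G t (conjugate G (inv h) (conjugate G (inv t) x))"
      using t hc xc by (intro conjugate_conjugate[symmetric]) simp_all
    finally have "conjugate G (inv g) x = conjugate G t (conjugate G (inv h) (conjugate G (inv t) x))" .
    moreover have "conjugate G (inv h) (conjugate G (inv t) x) \<in> Y"
      using x(2) hS mem_normal_core_iff[OF Sc Y] unfolding h_def by blast
    ultimately show ?thesis using tY by simp
  qed
  then show ?thesis unfolding mem_normal_core_iff[OF tSc Y] using xc by blast
qed

end

lemma card_image_eq_of_same_fibres:
  assumes "\<And>x y. x \<in> A \<Longrightarrow> y \<in> A \<Longrightarrow> f x = f y \<longleftrightarrow> g x = g y"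
  shows "card (f ` A) = card (g ` A)"
proof -
  have "bij_betw (\<lambda>u. g (inv_into A f u)) (f ` A) (g ` A)"
  proof (rule bij_betw_imageI)
    show "inj_on (\<lambda>u. g (inv_into A f u)) (f ` A)"
      by (rule inj_onI) (metis assms f_inv_into_f inv_into_into)
    show "(\<lambda>u. g (inv_into A f u)) ` f ` A = g ` A"
    proof
      show "g ` A \<subseteq> (\<lambda>u. g (inv_into A f u)) ` f ` A"
      proof
        fix w assume "w \<in> g ` A"
        then obtain x where x: "x \<in> A" "w = g x" by blast
        have "g (inv_into A f (f x)) = g x"
          using assms x by (metis f_inv_into_f imageI inv_into_into)
        then show "w \<in> (\<lambda>u. g (inv_into A f u)) ` f ` A" using x by force
      qed
    qed (auto intro: inv_into_into)
  qed
  then show ?thesis by (rule bij_betw_same_card)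
qed

lemma alt4_card3_submonoid_eq_point_stab:
  assumes sub: "Y \<subseteq> carrier (alt_group 4)" and cl: "\<And>a b. a \<in> Y \<Longrightarrow> b \<in> Y \<Longrightarrow> a \<circ> b \<in> Y"
    and idY: "id \<in> Y" and c3: "card Y = 3"
  shows "\<exists>i\<in>{1..4}. Y = alt_point_stab 4 i"
proof -
  have fin: "finite Y" using c3 card.infinite by fastforce
  have pY: "\<And>z. z \<in> Y \<Longrightarrow> z permutes {1..4}" using sub by (auto simp: alt_group_carrier)
  have "Y \<noteq> {id}" using c3 by auto
  then obtain x where x: "x \<in> Y" "x \<noteq> id" using idY by blast
  have "card (Y - {id, x}) = 1" using c3 x idY fin by (simp add: card_Diff_subset)
  then obtain y where "Y - {id, x} = {y}" by (meson card_1_singletonE)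
  then have y: "y \<in> Y" "y \<noteq> id" "y \<noteq> x" and Y3: "\<And>z. z \<in> Y \<Longrightarrow> z = id \<or> z = x \<or> z = y"
    by blast+
  have px: "x permutes {1..4}" "y permutes {1..4}" using pY x y by auto
  have xy_neq: "x \<circ> y \<noteq> x" "x \<circ> y \<noteq> y"
    using permutes_comp_cancel_left[OF px(1), of y id] permutes_comp_cancel_right[OF px(2), of x id] x y
    by auto
  have xy: "x \<circ> y = id" using cl[OF x(1) y(1)] xy_neq Y3 by blast
  have xx: "x \<circ> x = y"
  proof -
    have "x \<circ> x \<noteq> x" using permutes_comp_cancel_left[OF px(1), of x id] x by auto
    moreover have "x \<circ> x \<noteq> id"
      using xy permutes_comp_cancel_left[OF px(1), of x y] y by auto
    ultimately show ?thesis using Y3 cl[OF x(1) x(1)] by blast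
  qed
  have "\<And>z. x (x (x z)) = z" using xx xy by (metis comp_apply id_apply)
  then obtain i where i: "i \<in> {1..4}" "x i = i" using perm4_cube_id_has_fixpoint[OF px(1)] by blast
  have "Y \<subseteq> alt_point_stab 4 i"
  proof
    fix z assume z: "z \<in> Y"
    have "z i = i" using Y3[OF z] i xx by (metis comp_apply id_apply)
    then show "z \<in> alt_point_stab 4 i" using sub z by (auto simp: alt_group_carrier mem_alt_point_stab)
  qed
  moreover have "card (alt_point_stab 4 i) = 3"
    using card_alt_point_stab[of 4 i] i(1) by (simp add: fact_numeral)
  ultimately have "Y = alt_point_stab 4 i" using card_subset_eq[OF finite_alt_point_stab] c3 by simp
  then show ?thesis using i by blast
qed

lemma three_cycle_cube:
  assumes "distinct [a, b, c]"
  shows "cycle_of_list [a, b, c] \<circ> cycle_of_list [a, b, c] \<circ> cycle_of_list [a, b, c] = id"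
proof
  fix x
  show "(cycle_of_list [a, b, c] \<circ> cycle_of_list [a, b, c] \<circ> cycle_of_list [a, b, c]) x = id x"
    using assms by (cases "x = a"; cases "x = b"; cases "x = c") (auto simp: transpose_def)
qed

lemma sym_group_index_two_subgroup:
  assumes Y: "subgroup Y (sym_group n)" and c: "2 * card Y = fact n"
  shows "Y = carrier (alt_group n)"
proof -
  interpret S: group "sym_group n" by (rule sym_group_is_group)
  have n: "n \<ge> 2"
  proof (rule ccontr)
    assume "\<not> n \<ge> 2"
    then have "n = 0 \<or> n = 1" by auto
    then have "fact n = (1::nat)" by auto
    then show False using c by presburger
  qed
  have finS: "finite (carrier (sym_group n))" by (simp add: sym_group_def finite_permutations)
  have "card (rcosets\<^bsub>sym_group n\<^esub> Y) * card Y = 2 * card Y"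
    using S.lagrange[OF Y] sym_group_card_carrier[of n] c by (simp add: order_def)
  moreover have "card Y \<noteq> 0" using c fact_nonzero[of n] by (metis mult_0_right)
  ultimately have c2: "card (rcosets\<^bsub>sym_group n\<^esub> Y) = 2" by simp
  have tc: "three_cycles n \<subseteq> Y"
  proof
    fix p assume "p \<in> three_cycles n"
    then obtain cs where p: "p = cycle_of_list cs" and cs: "cycle cs" "length cs = 3" "set cs \<subseteq> {1..n}"
      by blast
    have pp: "p \<in> carrier (sym_group n)"
      using permutes_subset[OF cycle_permutes cs(3)] p by (simp add: sym_group_carrier)
    have "p \<circ> p \<circ> p = id" using three_cycle_cube[of "cs!0" "cs!1" "cs!2"] cs(1) stupid_lemma[OF cs(2)] p by metis
    then have "p = (p \<circ> p) \<circ> (p \<circ> p)" by (metis comp_assoc comp_id)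
    moreover have "p \<circ> p \<in> Y" using S.index_two_square_mem[OF Y c2 finS pp] by (simp add: sym_group_mult)
    ultimately show "p \<in> Y" using subgroup.m_closed[OF Y, of "p \<circ> p" "p \<circ> p"] by (simp add: sym_group_mult)
  qed
  interpret A: group "alt_group n" by (rule alt_group_is_group)
  have "subgroup (Y \<inter> carrier (alt_group n)) (alt_group n)"
    using S.subgroup_incl[OF subgroup_Int[OF Y alt_group_is_subgroup] alt_group_is_subgroup]
    by (simp add: alt_group_def)
  moreover have "three_cycles n \<subseteq> Y \<inter> carrier (alt_group n)" using tc three_cycles_incl by blast
  ultimately have "generate (alt_group n) (three_cycles n) \<subseteq> Y"
    using A.generate_subgroup_incl by blast
  then have sub: "carrier (alt_group n) \<subseteq> Y" using alt_group_carrier_as_three_cycles by blast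
  moreover have "finite Y" using c n card.infinite by fastforce
  ultimately show ?thesis using card_subset_eq[OF _ sub] c alt_group_card_carrier[OF n] by simp
qed

lemma sym_point_stab_centraliser_trivial:
  assumes n: "4 \<le> n" and t: "\<tau> permutes {1..n::nat}" and t1: "\<tau> 1 = 1"
    and comm: "\<And>\<sigma>. \<sigma> permutes {1..n} \<Longrightarrow> \<sigma> 1 = 1 \<Longrightarrow> \<tau> \<circ> \<sigma> = \<sigma> \<circ> \<tau>"
  shows "\<tau> = id"
proof -
  have inj: "\<And>x y. \<tau> x = \<tau> y \<Longrightarrow> x = y" using t by (metis permutes_inj injD)
  have fixes_or_swaps: "\<tau> a = a \<or> \<tau> a = b" if ab: "a \<in> {2..n}" "b \<in> {2..n}" "a \<noteq> b" for a b
  proof (rule ccontr)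
    assume "\<not> (\<tau> a = a \<or> \<tau> a = b)"
    then have "transpose a b (\<tau> a) = \<tau> a" by (simp add: transpose_def)
    have "transpose a b permutes {1..n}" "transpose a b 1 = 1" using ab by (auto intro: permutes_swap_id)
    then have "\<tau> (transpose a b a) = transpose a b (\<tau> a)" using comm by (metis comp_apply)
    then have "\<tau> b = \<tau> a" using \<open>transpose a b (\<tau> a) = \<tau> a\<close> by simp
    then show False using inj ab(3) by metis
  qed
  have fixed: "\<tau> a = a" if a: "a \<in> {2..n}" for a
  proof -
    define b where "b = (if a = 2 then 3 else 2 :: nat)"
    define c where "c = (if a = 4 then 3 else 4 :: nat)"
    have "b \<in> {2..n}" "c \<in> {2..n}" "b \<noteq> a" "c \<noteq> a" "b \<noteq> c" using a n by (auto simp: b_def c_def)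
    then show ?thesis using fixes_or_swaps[OF a] by metis
  qed
  show ?thesis
  proof
    fix x show "\<tau> x = id x"
    proof (cases "x \<in> {2..n}")
      case False
      then have "x = 1 \<or> x \<notin> {1..n}" by auto
      then show ?thesis using t1 permutes_not_in[OF t] by auto
    qed (simp add: fixed)
  qed
qed

lemma card_even_perms: "2 \<le> n \<Longrightarrow> 2 * card {g. g permutes {1..n} \<and> evenperm g} = fact n"
  using alt_group_card_carrier[of n] by (simp add: alt_group_def sym_group_def)

lemma card_odd_perms: "2 \<le> n \<Longrightarrow> 2 * card {g. g permutes {1..n} \<and> \<not> evenperm g} = fact n"
proof -
  assume n: "2 \<le> n"
  define Ev where "Ev = {g. g permutes {1..n} \<and> evenperm g}"
  define Od where "Od = {g. g permutes {1..n} \<and> \<not> evenperm g}"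
  have "finite Ev" "finite Od"
    unfolding Ev_def Od_def by (auto intro: finite_subset[OF _ finite_permutations[of "{1..n}"]])
  then have "card (Ev \<union> Od) = card Ev + card Od" by (rule card_Un_disjoint) (auto simp: Ev_def Od_def)
  moreover have "Ev \<union> Od = {g. g permutes {1..n}}" unfolding Ev_def Od_def by blast
  ultimately have "card Ev + card Od = fact n" using card_permutations[of "{1..n}" n] by simp
  moreover have "2 * card Ev = fact n" using card_even_perms[OF n] unfolding Ev_def .
  ultimately have "2 * card Od = fact n" by linarith
  then show ?thesis unfolding Od_def .
qed

lemma card_box_prod:
  assumes n: "2 \<le> n" and m: "2 \<le> m"
  shows "2 * card (carrier (box_prod n m)) = fact n * fact m"
proof -
  define Ev where "Ev k = {g. g permutes {1..k::nat} \<and> evenperm g}" for k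
  define Od where "Od k = {g. g permutes {1..k::nat} \<and> \<not> evenperm g}" for k
  have fin: "finite (Ev k)" "finite (Od k)" for k
    unfolding Ev_def Od_def by (auto intro: finite_subset[OF _ finite_permutations[of "{1..k}"]])
  have sign_eq: "sign g = sign h \<longleftrightarrow> evenperm g = evenperm h" for g h :: "nat \<Rightarrow> nat"
    by (simp add: sign_def)
  have "carrier (box_prod n m) = {(g, h). g permutes {1..n} \<and> h permutes {1..m} \<and> sign g = sign h}"
    by (simp add: box_prod_def)
  also have "\<dots> = Ev n \<times> Ev m \<union> Od n \<times> Od m" unfolding Ev_def Od_def sign_eq by auto
  finally have carr: "carrier (box_prod n m) = Ev n \<times> Ev m \<union> Od n \<times> Od m" .
  have "(Ev n \<times> Ev m) \<inter> (Od n \<times> Od m) = {}" by (auto simp: Ev_def Od_def)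
  then have "card (carrier (box_prod n m)) = card (Ev n) * card (Ev m) + card (Od n) * card (Od m)"
    unfolding carr using fin by (simp add: card_Un_disjoint card_cartesian_product)
  moreover have ev: "2 * card (Ev n) = fact n" "2 * card (Ev m) = fact m"
    and od: "2 * card (Od n) = fact n" "2 * card (Od m) = fact m"
    using n m card_even_perms card_odd_perms unfolding Ev_def Od_def by blast+
  then have "card (Od n) = card (Ev n)" "card (Od m) = card (Ev m)" by linarith+
  ultimately have "2 * card (carrier (box_prod n m)) = (2 * card (Ev n)) * (2 * card (Ev m))"
    by (simp add: algebra_simps)
  then show ?thesis unfolding ev .
qed

definition perm_rep :: "(nat \<Rightarrow> 'x) \<Rightarrow> nat \<Rightarrow> ('x \<Rightarrow> 'x) \<Rightarrow> nat \<Rightarrow> nat" where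
  "perm_rep lab n f i = (if i \<in> {1..n} then inv_into {1..n} lab (f (lab i)) else i)"

lemma perm_rep_outside: "i \<notin> {1..n} \<Longrightarrow> perm_rep lab n f i = i"
  unfolding perm_rep_def by (rule if_not_P)

context
  fixes lab :: "nat \<Rightarrow> 'x" and n :: nat and S :: "'x set"
  assumes lab: "bij_betw lab {1..n} S"
begin

lemma perm_rep_inside: "i \<in> {1..n} \<Longrightarrow> perm_rep lab n f i = inv_into {1..n} lab (f (lab i))"
  unfolding perm_rep_def by (rule if_P)

lemma label_image_mem: "f ` S \<subseteq> S \<Longrightarrow> i \<in> {1..n} \<Longrightarrow> f (lab i) \<in> S"
  using bij_betwE[OF lab] by blast

lemma perm_rep_mem: "f ` S \<subseteq> S \<Longrightarrow> i \<in> {1..n} \<Longrightarrow> perm_rep lab n f i \<in> {1..n}"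
  using perm_rep_inside label_image_mem bij_betwE[OF bij_betw_inv_into[OF lab]] by simp

lemma perm_rep_label: "f ` S \<subseteq> S \<Longrightarrow> i \<in> {1..n} \<Longrightarrow> lab (perm_rep lab n f i) = f (lab i)"
  using perm_rep_inside label_image_mem bij_betw_inv_into_right[OF lab] by simp

lemma perm_rep_eqI:
  assumes "i \<in> {1..n}" "i' \<in> {1..n}" "lab i' = f (lab i)"
  shows "perm_rep lab n f i = i'"
proof -
  have "perm_rep lab n f i = inv_into {1..n} lab (lab i')"
    using perm_rep_inside[OF assms(1)] assms(3) by simp
  also have "\<dots> = i'" by (rule bij_betw_inv_into_left[OF lab assms(2)])
  finally show ?thesis .
qed

lemma perm_rep_comp:
  assumes "f ` S \<subseteq> S" "g ` S \<subseteq> S" "\<And>x. x \<in> S \<Longrightarrow> h x = f (g x)"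
  shows "perm_rep lab n h = perm_rep lab n f \<circ> perm_rep lab n g"
proof
  fix i show "perm_rep lab n h i = (perm_rep lab n f \<circ> perm_rep lab n g) i"
  proof (cases "i \<in> {1..n}")
    case True
    have mem: "perm_rep lab n f (perm_rep lab n g i) \<in> {1..n}"
      using perm_rep_mem[OF assms(1) perm_rep_mem[OF assms(2) True]] .
    have "lab (perm_rep lab n f (perm_rep lab n g i)) = h (lab i)"
      using perm_rep_label[OF assms(1) perm_rep_mem[OF assms(2) True]] perm_rep_label[OF assms(2) True]
        assms(3) bij_betwE[OF lab] True by simp
    then show ?thesis unfolding comp_apply by (rule perm_rep_eqI[OF True mem])
  qed (simp add: perm_rep_outside)
qed

lemma perm_rep_eq_id_iff:
  assumes "f ` S \<subseteq> S"
  shows "perm_rep lab n f = id \<longleftrightarrow> (\<forall>x\<in>S. f x = x)"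
proof
  assume p: "perm_rep lab n f = id"
  show "\<forall>x\<in>S. f x = x"
  proof
    fix x assume "x \<in> S"
    then obtain i where "i \<in> {1..n}" "x = lab i" using lab by (auto simp: bij_betw_def)
    then show "f x = x" using perm_rep_label[OF assms \<open>i \<in> {1..n}\<close>] p by simp
  qed
next
  assume f: "\<forall>x\<in>S. f x = x"
  have "perm_rep lab n f i = i" for i
  proof (cases "i \<in> {1..n}")
    case True
    then show ?thesis using f bij_betwE[OF lab] by (intro perm_rep_eqI) auto
  qed (rule perm_rep_outside)
  then show "perm_rep lab n f = id" by auto
qed

lemma perm_rep_permutes:
  assumes f: "f ` S \<subseteq> S" "inj_on f S"
  shows "perm_rep lab n f permutes {1..n}"
proof (rule bij_imp_permutes)
  have inj: "inj_on (perm_rep lab n f) {1..n}"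
  proof (rule inj_onI)
    fix i i' assume ii': "i \<in> {1..n}" "i' \<in> {1..n}" "perm_rep lab n f i = perm_rep lab n f i'"
    then have "f (lab i) = f (lab i')"
      using perm_rep_label[OF f(1) ii'(1)] perm_rep_label[OF f(1) ii'(2)] by simp
    then have "lab i = lab i'" using f(2) bij_betwE[OF lab] ii' by (auto dest: inj_onD)
    then show "i = i'" using lab ii' by (auto simp: bij_betw_def dest: inj_onD)
  qed
  moreover have "perm_rep lab n f ` {1..n} \<subseteq> {1..n}" using perm_rep_mem[OF f(1)] by auto
  ultimately have "perm_rep lab n f ` {1..n} = {1..n}" by (intro endo_inj_surj) simp_all
  then show "bij_betw (perm_rep lab n f) {1..n} {1..n}" using inj by (simp add: bij_betw_def)
qed (rule perm_rep_outside)

end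

context group
begin

lemma perm_hom_one:
  assumes "subgroup H G" "\<And>x y. x \<in> H \<Longrightarrow> y \<in> H \<Longrightarrow> \<phi> (x \<otimes> y) = \<phi> x \<circ> \<phi> y"
    "\<And>x. x \<in> H \<Longrightarrow> \<phi> x permutes S"
  shows "\<phi> \<one> = id"
proof -
  have "\<phi> \<one> \<circ> \<phi> \<one> = \<phi> \<one> \<circ> id" using assms(2)[of \<one> \<one>] subgroup.one_closed[OF assms(1)] by simp
  then show ?thesis by (rule permutes_comp_cancel_left[OF assms(3)[OF subgroup.one_closed[OF assms(1)]]])
qed

lemma perm_hom_inv:
  assumes "subgroup H G" "\<And>x y. x \<in> H \<Longrightarrow> y \<in> H \<Longrightarrow> \<phi> (x \<otimes> y) = \<phi> x \<circ> \<phi> y"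
    "\<And>x. x \<in> H \<Longrightarrow> \<phi> x permutes S" "x \<in> H"
  shows "\<phi> (inv x) = inv' (\<phi> x)"
proof -
  have x: "x \<in> carrier G" "inv x \<in> H"
    using subgroup.subset[OF assms(1)] assms(4) subgroup.m_inv_closed[OF assms(1,4)] by auto
  have "\<phi> (inv x) \<circ> \<phi> x = id" using assms(2)[OF x(2) assms(4)] perm_hom_one[OF assms(1-3)] x by simp
  also have "\<dots> = inv' (\<phi> x) \<circ> \<phi> x" using permutes_inv_o(2)[OF assms(3)[OF assms(4)]] by simp
  finally show ?thesis by (rule permutes_comp_cancel_right[OF assms(3)[OF assms(4)]])
qed

lemma perm_hom_eq_iff:
  assumes "subgroup H G" "\<And>x y. x \<in> H \<Longrightarrow> y \<in> H \<Longrightarrow> \<phi> (x \<otimes> y) = \<phi> x \<circ> \<phi> y"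
    "\<And>x. x \<in> H \<Longrightarrow> \<phi> x permutes S" "x \<in> H" "y \<in> H"
  shows "\<phi> x = \<phi> y \<longleftrightarrow> \<phi> (x \<otimes> inv y) = id"
proof -
  have y: "y \<in> carrier G" "inv y \<in> H"
    using subgroup.subset[OF assms(1)] assms(5) subgroup.m_inv_closed[OF assms(1,5)] by auto
  have xy: "x \<otimes> inv y \<in> H" using subgroup.m_closed[OF assms(1) assms(4) y(2)] .
  have "x \<in> carrier G" using subgroup.subset[OF assms(1)] assms(4) by auto
  then have "x = (x \<otimes> inv y) \<otimes> y" using y by (simp add: m_assoc)
  then have "\<phi> x = \<phi> (x \<otimes> inv y) \<circ> \<phi> y" using assms(2)[OF xy assms(5)] by simp
  then show ?thesis
    using permutes_comp_cancel_right[OF assms(3)[OF assms(5)], of "\<phi> (x \<otimes> inv y)" id] by auto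
qed

lemma evenperm_perm_hom_mult:
  assumes "subgroup H G" "\<And>x y. x \<in> H \<Longrightarrow> y \<in> H \<Longrightarrow> \<phi> (x \<otimes> y) = \<phi> x \<circ> \<phi> y"
    "\<And>x. x \<in> H \<Longrightarrow> \<phi> x permutes {1..n::nat}" "x \<in> H" "y \<in> H"
  shows "evenperm (\<phi> (x \<otimes> y)) \<longleftrightarrow> evenperm (\<phi> x) = evenperm (\<phi> y)"
proof -
  have "permutation (\<phi> x)" "permutation (\<phi> y)"
    using assms(3-5) permutes_interval_permutation by blast+
  then show ?thesis using assms(2)[OF assms(4,5)] by (simp add: evenperm_comp)
qed

lemma perm_hom_image_subgroup:
  assumes H: "subgroup H G" and mult: "\<And>x y. x \<in> H \<Longrightarrow> y \<in> H \<Longrightarrow> \<phi> (x \<otimes> y) = \<phi> x \<circ> \<phi> y"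
    and perm: "\<And>x. x \<in> H \<Longrightarrow> \<phi> x permutes {1..n}"
    and C: "subgroup C G" "C \<subseteq> H"
  shows "subgroup (\<phi> ` C) (sym_group n)"
proof (rule group.subgroupI[OF sym_group_is_group])
  show "\<phi> ` C \<subseteq> carrier (sym_group n)" using C(2) perm by (auto simp: sym_group_carrier)
  show "\<phi> ` C \<noteq> {}" using subgroup.one_closed[OF C(1)] by blast
  show "inv\<^bsub>sym_group n\<^esub> a \<in> \<phi> ` C" if a: "a \<in> \<phi> ` C" for a
  proof -
    obtain c where c: "c \<in> C" "a = \<phi> c" using a by blast
    then have "inv\<^bsub>sym_group n\<^esub> a = \<phi> (inv c)"
      using C(2) perm perm_hom_inv[where \<phi> = \<phi>, OF H mult perm] by (auto simp: sym_group_carrier)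
    then show ?thesis using subgroup.m_inv_closed[OF C(1) c(1)] by simp
  qed
  show "a \<otimes>\<^bsub>sym_group n\<^esub> b \<in> \<phi> ` C" if ab: "a \<in> \<phi> ` C" "b \<in> \<phi> ` C" for a b
  proof -
    obtain c c' where c: "c \<in> C" "a = \<phi> c" "c' \<in> C" "b = \<phi> c'" using ab by blast
    moreover have "c \<in> H" "c' \<in> H" using c(1,3) C(2) by auto
    ultimately have "a \<otimes>\<^bsub>sym_group n\<^esub> b = \<phi> (c \<otimes> c')" using mult by (simp add: sym_group_mult)
    then show ?thesis using subgroup.m_closed[OF C(1) c(1,3)] by simp
  qed
qed

end

section \<open>The vertex stabiliser\<close>

text \<open>In the amalgam, \<open>H = G\<^sub>x\<close>, \<open>P = G\<^sub>x\<^sub>y\<close> and \<open>K = G\<^sub>x\<^sup>[\<^sup>1\<^sup>]\<close>.\<close>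
locale vertex_stabiliser = group U for U :: "('a, 'b) monoid_scheme" (structure) +
  fixes H P K :: "'a set" and j :: "'a \<Rightarrow> nat \<Rightarrow> nat"
  assumes H: "subgroup H U" and P: "subgroup P U" and P_subset_H: "P \<subseteq> H"
    and finite_H: "finite H"
    and K_eq: "K = normal_core U H P"
    and index_P: "card (rcosets\<^bsub>U\<lparr>carrier := H\<rparr>\<^esub> P) = 5"
    and index_K: "card (rcosets\<^bsub>U\<lparr>carrier := H\<rparr>\<^esub> K) = 120"
    and j: "j \<in> iso (U\<lparr>carrier := K\<rparr>) (alt_group 4)"
begin

lemma H_carrier [simp]: "h \<in> H \<Longrightarrow> h \<in> carrier U" using subgroup.subset[OF H] by blast
lemma P_carrier [simp]: "p \<in> P \<Longrightarrow> p \<in> carrier U" using subgroup.subset[OF P] by blast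
lemma P_H [simp]: "p \<in> P \<Longrightarrow> p \<in> H" using P_subset_H by blast
lemma one_H [simp]: "\<one> \<in> H" by (rule subgroup.one_closed[OF H])
lemma one_P [simp]: "\<one> \<in> P" by (rule subgroup.one_closed[OF P])
lemma mult_H [simp]: "a \<in> H \<Longrightarrow> b \<in> H \<Longrightarrow> a \<otimes> b \<in> H" by (rule subgroup.m_closed[OF H])
lemma inv_H [simp]: "a \<in> H \<Longrightarrow> inv a \<in> H" by (rule subgroup.m_inv_closed[OF H])
lemma mult_P [simp]: "a \<in> P \<Longrightarrow> b \<in> P \<Longrightarrow> a \<otimes> b \<in> P" by (rule subgroup.m_closed[OF P])
lemma inv_P [simp]: "a \<in> P \<Longrightarrow> inv a \<in> P" by (rule subgroup.m_inv_closed[OF P])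

lemma inv_P_iff [simp]: "a \<in> carrier U \<Longrightarrow> inv a \<in> P \<longleftrightarrow> a \<in> P"
  using inv_P[of "inv a"] by auto

lemma mem_K_iff: "x \<in> K \<longleftrightarrow> x \<in> H \<and> (\<forall>g\<in>H. conjugate U g x \<in> P)"
proof -
  have K: "x \<in> K \<longleftrightarrow> (\<forall>g\<in>H. x \<in> carrier U \<and> conjugate U (inv g) x \<in> P)"
    unfolding K_eq by (rule mem_normal_core_iff[OF subgroup.subset[OF H] subgroup.subset[OF P]])
  show ?thesis
  proof
    assume x: "x \<in> K"
    have c: "conjugate U g x \<in> P" if g: "g \<in> H" for g
    proof -
      have "conjugate U (inv (inv g)) x \<in> P" using x K inv_H[OF g] by blast
      then show ?thesis using g by simp
    qed
    moreover have "x \<in> carrier U" using x K one_H by blast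
    then have "x \<in> P" using c[OF one_H] by simp
    ultimately show "x \<in> H \<and> (\<forall>g\<in>H. conjugate U g x \<in> P)" by simp
  next
    assume "x \<in> H \<and> (\<forall>g\<in>H. conjugate U g x \<in> P)"
    then show "x \<in> K" using K by simp
  qed
qed

lemma K_H [simp]: "k \<in> K \<Longrightarrow> k \<in> H" using mem_K_iff by blast

lemma K_P [simp]:
  assumes "k \<in> K" shows "k \<in> P"
proof -
  have "conjugate U \<one> k \<in> P" using assms mem_K_iff one_H by blast
  then show ?thesis using assms by simp
qed

lemma K_carrier [simp]: "k \<in> K \<Longrightarrow> k \<in> carrier U" by simp

lemma subgroup_K: "subgroup K U"
proof (rule subgroupI)
  show "K \<subseteq> carrier U" by auto
  show "K \<noteq> {}" using mem_K_iff[of \<one>] by auto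
  show "inv a \<in> K" if "a \<in> K" for a
    using that unfolding mem_K_iff by (simp add: conjugate_inv)
  show "a \<otimes> b \<in> K" if "a \<in> K" "b \<in> K" for a b
    using that unfolding mem_K_iff by (simp add: conjugate_mult)
qed

lemma one_K [simp]: "\<one> \<in> K" by (rule subgroup.one_closed[OF subgroup_K])
lemma mult_K [simp]: "a \<in> K \<Longrightarrow> b \<in> K \<Longrightarrow> a \<otimes> b \<in> K" by (rule subgroup.m_closed[OF subgroup_K])
lemma inv_K [simp]: "a \<in> K \<Longrightarrow> inv a \<in> K" by (rule subgroup.m_inv_closed[OF subgroup_K])

lemma conjugate_K_closed:
  assumes h: "h \<in> H" and k: "k \<in> K"
  shows "conjugate U h k \<in> K"
  unfolding mem_K_iff
proof (intro conjI ballI)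
  show "conjugate U h k \<in> H" using h k by (simp add: conjugate_def)
  fix g assume g: "g \<in> H"
  then have "conjugate U g (conjugate U h k) = conjugate U (g \<otimes> h) k"
    using h k by (simp add: conjugate_comp)
  moreover have "conjugate U (g \<otimes> h) k \<in> P" using k g h unfolding mem_K_iff by simp
  ultimately show "conjugate U g (conjugate U h k) \<in> P" by simp
qed

lemma group_H: "group (U\<lparr>carrier := H\<rparr>)" by (rule subgroup_imp_group[OF H])

lemma card_K: "card K = 12"
proof -
  have "card (carrier (alt_group 4)) = 12"
    using alt_group_card_carrier[of 4] by (simp add: fact_numeral)
  then show ?thesis using bij_betw_same_card[of j K "carrier (alt_group 4)"] j by (simp add: iso_def)
qed

lemma finite_K: "finite K" by (rule card_ge_0_finite) (simp add: card_K)

lemma card_H: "card H = 1440"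
proof -
  have "subgroup K (U\<lparr>carrier := H\<rparr>)" by (rule subgroup_incl[OF subgroup_K H]) auto
  then have "card (rcosets\<^bsub>U\<lparr>carrier := H\<rparr>\<^esub> K) * card K = card H"
    using group.lagrange[OF group_H] by (simp add: order_def)
  then show ?thesis using index_K card_K by simp
qed

lemma card_P: "card P = 288"
proof -
  have "card (rcosets\<^bsub>U\<lparr>carrier := H\<rparr>\<^esub> P) * card P = card H"
    using group.lagrange[OF group_H subgroup_incl[OF P H P_subset_H]] by (simp add: order_def)
  then show ?thesis using index_P card_H by simp
qed

subsection \<open>Action on the neighbours\<close>

definition nbrs :: "'a set set" where "nbrs = rcosets\<^bsub>U\<lparr>carrier := H\<rparr>\<^esub> P"

lemma nbrs_eq: "nbrs = (\<lambda>a. P #> a) ` H"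
  unfolding nbrs_def RCOSETS_def by auto

lemma card_nbrs: "card nbrs = 5" using index_P by (simp add: nbrs_def)

lemma P_mem_nbrs: "P \<in> nbrs"
proof -
  have "P #> \<one> = P" using subgroup.subset[OF P] by simp
  then show ?thesis unfolding nbrs_eq using one_H by blast
qed

lemma coset_act_mem:
  assumes h: "h \<in> H" and Q: "Q \<in> nbrs"
  shows "Q #> inv h \<in> nbrs"
proof -
  obtain a where a: "a \<in> H" "Q = P #> a" using Q unfolding nbrs_eq by blast
  then have "Q #> inv h = P #> (a \<otimes> inv h)" using h subgroup.subset[OF P] by (simp add: coset_mult_assoc)
  then show ?thesis unfolding nbrs_eq using a h by simp
qed

lemma nbrs_subset_carrier: "Q \<in> nbrs \<Longrightarrow> Q \<subseteq> carrier U"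
  unfolding nbrs_eq using r_coset_subset_G[OF subgroup.subset[OF P]] H_carrier by blast

lemma coset_act_mult:
  "h1 \<in> H \<Longrightarrow> h2 \<in> H \<Longrightarrow> Q \<in> nbrs \<Longrightarrow> Q #> inv (h1 \<otimes> h2) = (Q #> inv h2) #> inv h1"
  using nbrs_subset_carrier by (simp add: coset_mult_assoc inv_mult_group)

lemma coset_act_fixes_iff:
  assumes a: "a \<in> H" and h: "h \<in> H"
  shows "(P #> a) #> inv h = P #> a \<longleftrightarrow> conjugate U a h \<in> P"
proof -
  have "(P #> a) #> inv h = P #> (a \<otimes> inv h)" using a h subgroup.subset[OF P] by (simp add: coset_mult_assoc)
  moreover have "P #> (a \<otimes> inv h) = P #> a \<longleftrightarrow> inv (conjugate U a h) \<in> P"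
    using rcos_eq_iff[OF P, of "a \<otimes> inv h" a] a h by (simp add: conjugate_def inv_mult_group m_assoc)
  ultimately show ?thesis using a h by simp
qed

lemma coset_act_inj:
  assumes h: "h \<in> H"
  shows "inj_on (\<lambda>Q. Q #> inv h) nbrs"
proof (rule inj_onI)
  have undo: "(Q #> inv h) #> h = Q" if "Q \<in> nbrs" for Q
    using nbrs_subset_carrier[OF that] h by (simp add: coset_mult_assoc)
  fix Q Q' assume "Q \<in> nbrs" "Q' \<in> nbrs" "Q #> inv h = Q' #> inv h"
  then show "Q = Q'" using undo by metis
qed

lemma nbr_labelling_exists: "\<exists>lab. bij_betw lab {1..5::nat} nbrs \<and> lab 1 = P"
proof -
  have "finite nbrs" using card_nbrs by (intro card_ge_0_finite) simp
  then obtain lab0 where lab0: "bij_betw lab0 {1..5::nat} nbrs"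
    using finite_same_card_bij[of "{1..5::nat}"] card_nbrs by auto
  define i0 where "i0 = inv_into {1..5} lab0 P"
  have i0: "i0 \<in> {1..5}" "lab0 i0 = P"
    using bij_betwE[OF bij_betw_inv_into[OF lab0]] bij_betw_inv_into_right[OF lab0] P_mem_nbrs
    unfolding i0_def by auto
  have "transpose 1 i0 permutes {1..5}" using i0 by (intro permutes_swap_id) auto
  then have "bij_betw (lab0 \<circ> transpose 1 i0) {1..5} nbrs"
    using bij_betw_trans[OF permutes_imp_bij lab0] by blast
  moreover have "(lab0 \<circ> transpose 1 i0) 1 = P" using i0 by simp
  ultimately show ?thesis by blast
qed

text \<open>Label 1 is the coset \<open>P\<close> itself, i.e. the neighbour \<open>y\<close> of \<open>x\<close>.\<close>
definition nbr_label :: "nat \<Rightarrow> 'a set" where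
  "nbr_label = (SOME lab. bij_betw lab {1..5::nat} nbrs \<and> lab 1 = P)"

lemma nbr_label: "bij_betw nbr_label {1..5} nbrs" "nbr_label 1 = P"
  using someI_ex[OF nbr_labelling_exists] unfolding nbr_label_def by auto

definition nbr_perm :: "'a \<Rightarrow> nat \<Rightarrow> nat" where
  "nbr_perm h = perm_rep nbr_label 5 (\<lambda>Q. Q #> inv h)"

lemma coset_act_image: "h \<in> H \<Longrightarrow> (\<lambda>Q. Q #> inv h) ` nbrs \<subseteq> nbrs"
  using coset_act_mem by blast

lemma nbr_perm_permutes: "h \<in> H \<Longrightarrow> nbr_perm h permutes {1..5}"
  unfolding nbr_perm_def by (rule perm_rep_permutes[OF nbr_label(1) coset_act_image coset_act_inj])

lemma nbr_perm_mult:
  assumes "h1 \<in> H" "h2 \<in> H"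
  shows "nbr_perm (h1 \<otimes> h2) = nbr_perm h1 \<circ> nbr_perm h2"
  unfolding nbr_perm_def using assms coset_act_mult
  by (intro perm_rep_comp[OF nbr_label(1) coset_act_image coset_act_image])

lemma nbr_perm_eq_id_iff:
  assumes h: "h \<in> H"
  shows "nbr_perm h = id \<longleftrightarrow> h \<in> K"
proof -
  have "nbr_perm h = id \<longleftrightarrow> (\<forall>a\<in>H. (P #> a) #> inv h = P #> a)"
    unfolding nbr_perm_def perm_rep_eq_id_iff[OF nbr_label(1) coset_act_image[OF h]] nbrs_eq by blast
  also have "\<dots> \<longleftrightarrow> h \<in> K" using coset_act_fixes_iff h unfolding mem_K_iff by auto
  finally show ?thesis .
qed

lemma nbr_perm_fixes_1_iff:
  assumes h: "h \<in> H"
  shows "nbr_perm h 1 = 1 \<longleftrightarrow> h \<in> P"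
proof -
  have "nbr_perm h 1 = 1 \<longleftrightarrow> P #> inv h = P"
  proof
    assume "nbr_perm h 1 = 1"
    then show "P #> inv h = P"
      using perm_rep_label[OF nbr_label(1) coset_act_image[OF h], of 1] nbr_label(2)
      by (simp add: nbr_perm_def)
  next
    assume "P #> inv h = P"
    then show "nbr_perm h 1 = 1"
      unfolding nbr_perm_def using nbr_label by (intro perm_rep_eqI[OF nbr_label(1)]) auto
  qed
  also have "P #> inv h = P \<longleftrightarrow> h \<in> P"
    using coset_act_fixes_iff[OF one_H h] subgroup.subset[OF P] h by simp
  finally show ?thesis .
qed

lemma nbr_perm_eq_iff: "x \<in> H \<Longrightarrow> y \<in> H \<Longrightarrow> nbr_perm x = nbr_perm y \<longleftrightarrow> x \<otimes> inv y \<in> K"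
  using perm_hom_eq_iff[OF H nbr_perm_mult nbr_perm_permutes] nbr_perm_eq_id_iff by simp

lemma nbr_perm_surj:
  assumes s: "\<sigma> permutes {1..5::nat}"
  shows "\<exists>h\<in>H. nbr_perm h = \<sigma>"
proof -
  have "card (nbr_perm ` H) = card ((\<lambda>h. K #> h) ` H)"
    using nbr_perm_eq_iff rcos_eq_iff[OF subgroup_K] by (intro card_image_eq_of_same_fibres) simp
  also have "(\<lambda>h. K #> h) ` H = rcosets\<^bsub>U\<lparr>carrier := H\<rparr>\<^esub> K" unfolding RCOSETS_def by auto
  finally have "card (nbr_perm ` H) = card {\<sigma>. \<sigma> permutes {1..5::nat}}"
    using index_K card_permutations[of "{1..5::nat}" 5] by (simp add: fact_numeral)
  moreover have "nbr_perm ` H \<subseteq> {\<sigma>. \<sigma> permutes {1..5::nat}}" using nbr_perm_permutes by auto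
  ultimately have "nbr_perm ` H = {\<sigma>. \<sigma> permutes {1..5::nat}}"
    using card_subset_eq[OF finite_permutations] by blast
  then have "\<sigma> \<in> nbr_perm ` H" using s by simp
  then show ?thesis by blast
qed

subsection \<open>Action on the Sylow 3-subgroups of the kernel\<close>

lemma j_mult: "a \<in> K \<Longrightarrow> b \<in> K \<Longrightarrow> j (a \<otimes> b) = j a \<circ> j b"
  using hom_mult[of j "U\<lparr>carrier := K\<rparr>" "alt_group 4" a b] j by (simp add: iso_def alt_group_mult)

lemma j_bij: "bij_betw j K (carrier (alt_group 4))"
  using j by (simp add: iso_def)

lemma j_permutes: "a \<in> K \<Longrightarrow> j a permutes {1..4}"
  using bij_betwE[OF j_bij] by (auto simp: alt_group_carrier)

lemma j_evenperm: "a \<in> K \<Longrightarrow> evenperm (j a)"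
  using bij_betwE[OF j_bij] by (auto simp: alt_group_carrier)

lemma j_inj: "a \<in> K \<Longrightarrow> b \<in> K \<Longrightarrow> j a = j b \<Longrightarrow> a = b"
  using j_bij by (auto simp: bij_betw_def dest: inj_onD)

lemma j_surj: "\<sigma> \<in> carrier (alt_group 4) \<Longrightarrow> \<exists>k\<in>K. j k = \<sigma>"
  using j_bij unfolding bij_betw_def by (metis imageE)

lemma j_one: "j \<one> = id"
  by (rule perm_hom_one[where \<phi> = j, OF subgroup_K j_mult j_permutes])

lemma j_conjugate:
  assumes "k \<in> K" "x \<in> K"
  shows "j (conjugate U k x) = j k \<circ> j x \<circ> inv' (j k)"
  using assms perm_hom_inv[where \<phi> = j, OF subgroup_K j_mult j_permutes assms(1)] by (simp add: conjugate_def j_mult)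

text \<open>The Sylow 3-subgroups of \<open>K \<cong> A\<^sub>4\<close> are the preimages of the point stabilisers.\<close>
definition syl3 :: "nat \<Rightarrow> 'a set" where
  "syl3 i = {k \<in> K. j k \<in> alt_point_stab 4 i}"

lemma syl3_subset_K: "syl3 i \<subseteq> K" unfolding syl3_def by auto

lemma image_j_syl3: "j ` syl3 i = alt_point_stab 4 i"
  using j_surj alt_point_stab_subset unfolding syl3_def by fastforce

lemma syl3_inj:
  assumes "i \<in> {1..4}" "i' \<in> {1..4}" "syl3 i = syl3 i'"
  shows "i = i'"
proof -
  have "alt_point_stab 4 i = alt_point_stab 4 i'" using image_j_syl3 assms(3) by metis
  then show ?thesis using alt_point_stab_inj[of 4 i i'] assms(1,2) by simp
qed

lemma card_syl3: "i \<in> {1..4} \<Longrightarrow> card (syl3 i) = 3"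
proof -
  assume i: "i \<in> {1..4}"
  have "inj_on j (syl3 i)" using j_inj syl3_subset_K by (meson inj_onI subsetD)
  then have "card (syl3 i) = card (alt_point_stab 4 i)" using card_image image_j_syl3 by metis
  then show ?thesis using card_alt_point_stab[of 4 i] i by (simp add: fact_numeral)
qed

lemma K_card3_submonoid_eq_syl3:
  assumes Y: "Y \<subseteq> K" "\<one> \<in> Y" "\<And>a b. a \<in> Y \<Longrightarrow> b \<in> Y \<Longrightarrow> a \<otimes> b \<in> Y" "card Y = 3"
  shows "\<exists>i\<in>{1..4}. Y = syl3 i"
proof -
  have inj: "inj_on j Y" using j_inj Y(1) by (meson inj_onI subsetD)
  have "j ` Y \<subseteq> carrier (alt_group 4)" using bij_betwE[OF j_bij] Y(1) by blast
  moreover have "j a \<circ> j b \<in> j ` Y" if "a \<in> Y" "b \<in> Y" for a b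
  proof -
    have "j (a \<otimes> b) = j a \<circ> j b" using that Y(1) j_mult by blast
    then show ?thesis using Y(3)[OF that] by (metis image_eqI)
  qed
  then have "a \<circ> b \<in> j ` Y" if "a \<in> j ` Y" "b \<in> j ` Y" for a b
    using that by blast
  moreover have "id \<in> j ` Y" using Y(2) j_one by force
  moreover have "card (j ` Y) = 3" using card_image[OF inj] Y(4) by simp
  ultimately obtain i where i: "i \<in> {1..4}" "j ` Y = alt_point_stab 4 i"
    using alt4_card3_submonoid_eq_point_stab by blast
  have "Y = syl3 i"
  proof
    show "Y \<subseteq> syl3 i" using Y(1) i(2) unfolding syl3_def by auto
    show "syl3 i \<subseteq> Y"
    proof
      fix k assume k: "k \<in> syl3 i"
      then obtain y where "y \<in> Y" "j k = j y" using i(2) unfolding syl3_def by force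
      then show "k \<in> Y" using j_inj k Y(1) syl3_subset_K by blast
    qed
  qed
  then show ?thesis using i(1) by blast
qed

lemma conjugate_image_mult:
  assumes "g \<in> carrier U" "h \<in> carrier U" "Y \<subseteq> carrier U"
  shows "conjugate U (g \<otimes> h) ` Y = conjugate U g ` conjugate U h ` Y"
  using assms by (auto simp: conjugate_comp image_image subset_iff intro!: image_cong)

lemma conjugate_image_inv_cancel:
  assumes "h \<in> carrier U" "Y \<subseteq> carrier U"
  shows "conjugate U (inv h) ` conjugate U h ` Y = Y"
  using assms by (auto simp: image_image subset_iff intro!: image_cong) 

lemma conjugate_image_syl3:
  assumes h: "h \<in> H" and i: "i \<in> {1..4}"
  shows "\<exists>i'\<in>{1..4}. conjugate U h ` syl3 i = syl3 i'"
proof (rule K_card3_submonoid_eq_syl3)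
  show "conjugate U h ` syl3 i \<subseteq> K" using conjugate_K_closed[OF h] syl3_subset_K by blast
  have "\<one> \<in> syl3 i" using j_one id_mem_alt_point_stab unfolding syl3_def by simp
  then have "conjugate U h \<one> \<in> conjugate U h ` syl3 i" by blast
  then show "\<one> \<in> conjugate U h ` syl3 i" using h by simp
  show "a \<otimes> b \<in> conjugate U h ` syl3 i"
    if ab: "a \<in> conjugate U h ` syl3 i" "b \<in> conjugate U h ` syl3 i" for a b
  proof -
    obtain x y where xy: "x \<in> syl3 i" "y \<in> syl3 i" "a = conjugate U h x" "b = conjugate U h y"
      using ab by blast
    then have "x \<otimes> y \<in> syl3 i" using j_mult alt_point_stab_comp unfolding syl3_def by auto
    moreover have "x \<in> K" "y \<in> K" using xy(1,2) syl3_subset_K by blast+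
    then have "a \<otimes> b = conjugate U h (x \<otimes> y)" using xy(3,4) h by (simp add: conjugate_mult)
    ultimately show ?thesis by blast
  qed
  have "inj_on (conjugate U h) (syl3 i)"
  proof (rule inj_onI)
    fix x y assume "x \<in> syl3 i" "y \<in> syl3 i" "conjugate U h x = conjugate U h y"
    moreover from this have "x \<in> K" "y \<in> K" using syl3_subset_K by blast+
    ultimately show "x = y" using conjugate_inj[of h x y] h by simp
  qed
  then show "card (conjugate U h ` syl3 i) = 3" using card_image card_syl3[OF i] by metis
qed

definition syls :: "'a set set" where "syls = syl3 ` {1..4}"

lemma syl3_bij: "bij_betw syl3 {1..4} syls"
  unfolding syls_def bij_betw_def using syl3_inj by (auto intro!: inj_onI)

lemma syls_subset_carrier: "Y \<in> syls \<Longrightarrow> Y \<subseteq> carrier U"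
  unfolding syls_def using syl3_subset_K K_carrier by blast

lemma conjugate_image_syls: "h \<in> H \<Longrightarrow> (\<lambda>Y. conjugate U h ` Y) ` syls \<subseteq> syls"
  unfolding syls_def using conjugate_image_syl3 by fastforce

lemma conjugate_image_inj: "h \<in> H \<Longrightarrow> inj_on (\<lambda>Y. conjugate U h ` Y) syls"
  by (rule inj_onI) (metis H_carrier conjugate_image_inv_cancel syls_subset_carrier)

definition syl_perm :: "'a \<Rightarrow> nat \<Rightarrow> nat" where
  "syl_perm h = perm_rep syl3 4 (\<lambda>Y. conjugate U h ` Y)"

lemma syl_perm_permutes: "h \<in> H \<Longrightarrow> syl_perm h permutes {1..4}"
  unfolding syl_perm_def
  by (rule perm_rep_permutes[OF syl3_bij conjugate_image_syls conjugate_image_inj])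

lemma syl_perm_mult:
  assumes "h1 \<in> H" "h2 \<in> H"
  shows "syl_perm (h1 \<otimes> h2) = syl_perm h1 \<circ> syl_perm h2"
  unfolding syl_perm_def using assms conjugate_image_mult syls_subset_carrier
  by (intro perm_rep_comp[OF syl3_bij conjugate_image_syls conjugate_image_syls]) simp_all

lemma syl_perm_K:
  assumes k: "k \<in> K"
  shows "syl_perm k = j k"
proof
  fix i show "syl_perm k i = j k i"
  proof (cases "i \<in> {1..4}")
    case True
    have jki: "j k i \<in> {1..4}" using permutes_in_image[OF j_permutes[OF k]] True by blast
    have "j ` conjugate U k ` syl3 i = (\<lambda>\<sigma>. j k \<circ> \<sigma> \<circ> inv' (j k)) ` j ` syl3 i"
      using j_conjugate[OF k] syl3_subset_K by (auto simp: image_image intro!: image_cong)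
    also have "\<dots> = j ` syl3 (j k i)"
      using alt_point_stab_conj[OF j_permutes[OF k]] image_j_syl3 by simp
    finally have "conjugate U k ` syl3 i = syl3 (j k i)"
      using inj_on_image_eq_iff[of j K] j_inj conjugate_K_closed[OF K_H[OF k]] syl3_subset_K
      unfolding inj_on_def by (metis image_subset_iff subset_iff)
    then show ?thesis
      unfolding syl_perm_def using True jki by (intro perm_rep_eqI[OF syl3_bij]) simp_all
  next
    case False
    then show ?thesis using perm_rep_outside permutes_not_in[OF j_permutes[OF k]] by (simp add: syl_perm_def)
  qed
qed

lemma syl_perm_centraliser:
  assumes x: "x \<in> H" and c: "\<And>k. k \<in> K \<Longrightarrow> x \<otimes> k = k \<otimes> x"
  shows "syl_perm x = id"
proof -
  have "conjugate U x ` Y = Y" if "Y \<in> syls" for Y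
  proof -
    have "conjugate U x k = k" if "k \<in> Y" for k
    proof -
      have "k \<in> K" using \<open>Y \<in> syls\<close> that syl3_subset_K unfolding syls_def by blast
      then show ?thesis using conjugate_eq_self_iff[of x k] c x by simp
    qed
    then show ?thesis by (auto simp: image_iff)
  qed
  then show ?thesis
    unfolding syl_perm_def using perm_rep_eq_id_iff[OF syl3_bij conjugate_image_syls[OF x]] by blast
qed

definition syl_ker :: "'a set" where "syl_ker = {c \<in> H. syl_perm c = id}"

lemma syl_ker_H [simp]: "c \<in> syl_ker \<Longrightarrow> c \<in> H" unfolding syl_ker_def by simp

lemma subgroup_syl_ker: "subgroup syl_ker U"
proof (rule subgroupI)
  show "syl_ker \<subseteq> carrier U" unfolding syl_ker_def by auto
  have "\<one> \<in> syl_ker" using syl_perm_centraliser[OF one_H] unfolding syl_ker_def by simp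
  then show "syl_ker \<noteq> {}" by blast
  show "inv a \<in> syl_ker" if "a \<in> syl_ker" for a
    using that perm_hom_inv[where \<phi> = syl_perm, OF H syl_perm_mult syl_perm_permutes]
    unfolding syl_ker_def by simp
  show "a \<otimes> b \<in> syl_ker" if "a \<in> syl_ker" "b \<in> syl_ker" for a b
    using that syl_perm_mult unfolding syl_ker_def by simp
qed

lemma finite_syl_ker: "finite syl_ker"
  unfolding syl_ker_def by (rule finite_subset[OF _ finite_H]) blast

lemma K_Int_syl_ker: "K \<inter> syl_ker = {\<one>}"
proof -
  have triv: "k = \<one>" if "k \<in> K" "k \<in> syl_ker" for k
  proof -
    have "j k = j \<one>" using that syl_perm_K j_one unfolding syl_ker_def by simp
    then show ?thesis by (rule j_inj[OF that(1) one_K])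
  qed
  show ?thesis
  proof
    show "K \<inter> syl_ker \<subseteq> {\<one>}" using triv by blast
    show "{\<one>} \<subseteq> K \<inter> syl_ker" using subgroup.one_closed[OF subgroup_syl_ker] by simp
  qed
qed

text \<open>\<open>c k c\<^sup>-\<^sup>1\<close> and \<open>k\<close> act alike on the Sylow subgroups, and on \<open>K\<close> this action is the
  faithful map \<open>j\<close>.\<close>
lemma syl_ker_commutes:
  assumes c: "c \<in> syl_ker" and k: "k \<in> K"
  shows "c \<otimes> k = k \<otimes> c"
proof -
  have cH: "c \<in> H" and fc: "syl_perm c = id" using c unfolding syl_ker_def by auto
  have ck: "conjugate U c k \<in> K" using conjugate_K_closed[OF cH k] .
  have "syl_perm (inv c) = id"
    using perm_hom_inv[where \<phi> = syl_perm, OF H syl_perm_mult syl_perm_permutes cH] fc by simp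
  then have "syl_perm (conjugate U c k) = syl_perm k"
    using cH k fc by (simp add: conjugate_def syl_perm_mult)
  then have "j (conjugate U c k) = j k" using syl_perm_K[OF ck] syl_perm_K[OF k] by simp
  then have "conjugate U c k = k" by (rule j_inj[OF ck k])
  then show ?thesis using conjugate_eq_self_iff cH k by simp
qed

lemma evenperm_syl_perm_mult:
  "x \<in> H \<Longrightarrow> y \<in> H \<Longrightarrow> evenperm (syl_perm (x \<otimes> y)) \<longleftrightarrow> evenperm (syl_perm x) = evenperm (syl_perm y)"
  by (rule evenperm_perm_hom_mult[where \<phi> = syl_perm, OF H syl_perm_mult syl_perm_permutes])

lemma evenperm_syl_perm_inv: "x \<in> H \<Longrightarrow> evenperm (syl_perm (inv x)) = evenperm (syl_perm x)"
  using evenperm_syl_perm_mult[of "inv x" x] perm_hom_one[where \<phi> = syl_perm, OF H syl_perm_mult syl_perm_permutes]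
  by simp

lemma even_syl_perm_iff:
  assumes h: "h \<in> H"
  shows "evenperm (syl_perm h) \<longleftrightarrow> (\<exists>k\<in>K. \<exists>c\<in>syl_ker. h = k \<otimes> c)"
proof
  assume ev: "evenperm (syl_perm h)"
  then have "syl_perm h \<in> carrier (alt_group 4)" using syl_perm_permutes[OF h] by (simp add: alt_group_carrier)
  then obtain k where k: "k \<in> K" "j k = syl_perm h" using j_surj by blast
  have "syl_perm (inv k \<otimes> h) = inv' (j k) \<circ> j k"
    using syl_perm_mult k h syl_perm_K perm_hom_inv[where \<phi> = j, OF subgroup_K j_mult j_permutes] by simp
  also have "\<dots> = id" using permutes_inv_o(2)[OF j_permutes[OF k(1)]] .
  finally have "inv k \<otimes> h \<in> syl_ker" unfolding syl_ker_def using k h by simp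
  moreover have "h = k \<otimes> (inv k \<otimes> h)" using k h by simp
  ultimately show "\<exists>k\<in>K. \<exists>c\<in>syl_ker. h = k \<otimes> c" using k by blast
next
  assume "\<exists>k\<in>K. \<exists>c\<in>syl_ker. h = k \<otimes> c"
  then obtain k c where "k \<in> K" "c \<in> syl_ker" "h = k \<otimes> c" by blast
  then show "evenperm (syl_perm h)"
    using evenperm_syl_perm_mult[of k c] syl_perm_K j_evenperm unfolding syl_ker_def
    by simp
qed

lemma card_even_syl_perm: "card {h \<in> H. evenperm (syl_perm h)} = 12 * card syl_ker"
proof -
  have "{h \<in> H. evenperm (syl_perm h)} = {k \<otimes> c | k c. k \<in> K \<and> c \<in> syl_ker}"
  proof (intro equalityI subsetI)
    fix h assume "h \<in> {h \<in> H. evenperm (syl_perm h)}"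
    then show "h \<in> {k \<otimes> c | k c. k \<in> K \<and> c \<in> syl_ker}" using even_syl_perm_iff by blast
  next
    fix h assume "h \<in> {k \<otimes> c | k c. k \<in> K \<and> c \<in> syl_ker}"
    then obtain k c where kc: "k \<in> K" "c \<in> syl_ker" "h = k \<otimes> c" by blast
    then have "h \<in> H" by simp
    then show "h \<in> {h \<in> H. evenperm (syl_perm h)}" using even_syl_perm_iff kc by blast
  qed
  then show ?thesis
    using card_mult_of_trivial_Int[OF subgroup_K subgroup_syl_ker K_Int_syl_ker finite_K finite_syl_ker] card_K
    by simp
qed

lemma card_syl_ker_if_odd:
  assumes h0: "h0 \<in> H" "\<not> evenperm (syl_perm h0)"
  shows "card syl_ker = 60"
proof -
  define Ev where "Ev = {h \<in> H. evenperm (syl_perm h)}"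
  define Od where "Od = {h \<in> H. \<not> evenperm (syl_perm h)}"
  have "Od = (\<lambda>h. h0 \<otimes> h) ` Ev"
  proof
    show "Od \<subseteq> (\<lambda>h. h0 \<otimes> h) ` Ev"
    proof
      fix x assume "x \<in> Od"
      then have "inv h0 \<otimes> x \<in> Ev" "x = h0 \<otimes> (inv h0 \<otimes> x)"
        using h0 evenperm_syl_perm_mult[of "inv h0" x] evenperm_syl_perm_inv[of h0]
        unfolding Ev_def Od_def by auto
      then show "x \<in> (\<lambda>h. h0 \<otimes> h) ` Ev" by blast
    qed
    show "(\<lambda>h. h0 \<otimes> h) ` Ev \<subseteq> Od"
      using h0 evenperm_syl_perm_mult[of h0] unfolding Ev_def Od_def by auto
  qed
  moreover have "inj_on (\<lambda>h. h0 \<otimes> h) Ev" using h0 unfolding Ev_def by (auto intro!: inj_onI)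
  ultimately have "card Od = card Ev" by (simp add: card_image)
  moreover have "card H = card Ev + card Od"
  proof -
    have "H = Ev \<union> Od" "Ev \<inter> Od = {}" unfolding Ev_def Od_def by auto
    moreover have "finite Ev" "finite Od" using finite_H unfolding Ev_def Od_def by auto
    ultimately show ?thesis using card_Un_disjoint by metis
  qed
  ultimately show ?thesis using card_even_syl_perm card_H unfolding Ev_def by simp
qed

lemma nbr_perm_image_syl_ker:
  assumes "card syl_ker = 60"
  shows "nbr_perm ` syl_ker = carrier (alt_group 5)"
proof (rule sym_group_index_two_subgroup)
  show "subgroup (nbr_perm ` syl_ker) (sym_group 5)"
    by (intro perm_hom_image_subgroup[where \<phi> = nbr_perm, OF H _ nbr_perm_permutes subgroup_syl_ker])
      (auto simp: nbr_perm_mult)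
  have "inj_on nbr_perm syl_ker"
  proof (rule inj_onI)
    fix c c' assume c: "c \<in> syl_ker" "c' \<in> syl_ker" "nbr_perm c = nbr_perm c'"
    then have "c \<otimes> inv c' \<in> K \<inter> syl_ker"
      using nbr_perm_eq_iff subgroup.m_closed[OF subgroup_syl_ker] subgroup.m_inv_closed[OF subgroup_syl_ker]
      unfolding syl_ker_def by auto
    then have "c \<otimes> inv c' = \<one>" using K_Int_syl_ker by blast
    moreover have "c = (c \<otimes> inv c') \<otimes> c'" using c(1,2) by (simp add: m_assoc)
    ultimately show "c = c'" using c(2) by simp
  qed
  then show "2 * card (nbr_perm ` syl_ker) = fact 5" using assms by (simp add: card_image fact_numeral)
qed

lemma evenperm_compat_if_odd:
  assumes h0: "h0 \<in> H" "\<not> evenperm (syl_perm h0)" and h: "h \<in> H"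
  shows "evenperm (nbr_perm h) = evenperm (syl_perm h)"
proof -
  have A5: "nbr_perm ` syl_ker = carrier (alt_group 5)"
    using nbr_perm_image_syl_ker[OF card_syl_ker_if_odd[OF h0]] .
  have "evenperm (nbr_perm h) \<longleftrightarrow> (\<exists>c\<in>syl_ker. nbr_perm h = nbr_perm c)"
    using A5 nbr_perm_permutes[OF h] by (auto simp: alt_group_carrier)
  also have "\<dots> \<longleftrightarrow> (\<exists>c\<in>syl_ker. h \<otimes> inv c \<in> K)"
    using nbr_perm_eq_iff h unfolding syl_ker_def by auto
  also have "\<dots> \<longleftrightarrow> evenperm (syl_perm h)"
  proof
    assume "\<exists>c\<in>syl_ker. h \<otimes> inv c \<in> K"
    then obtain c where c: "c \<in> syl_ker" "h \<otimes> inv c \<in> K" by blast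
    then have "h = (h \<otimes> inv c) \<otimes> c" using h unfolding syl_ker_def by (simp add: m_assoc)
    then show "evenperm (syl_perm h)" using even_syl_perm_iff[OF h] c by blast
  next
    assume "evenperm (syl_perm h)"
    then obtain k c where kc: "k \<in> K" "c \<in> syl_ker" "h = k \<otimes> c" using even_syl_perm_iff[OF h] by blast
    then have "h \<otimes> inv c = k" unfolding syl_ker_def by (simp add: m_assoc)
    then show "\<exists>c\<in>syl_ker. h \<otimes> inv c \<in> K" using kc by blast
  qed
  finally show ?thesis .
qed

end

section \<open>The element swapping the two ends of the edge\<close>

text \<open>\<open>t \<in> G\<^sub>e - G\<^sub>x\<^sub>y\<close> swaps \<open>x\<close> and \<open>y\<close>, so \<open>Kt = t K t\<^sup>-\<^sup>1\<close> defined below is \<open>G\<^sub>y\<^sup>[\<^sup>1\<^sup>]\<close>.\<close>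
locale edge_swap = vertex_stabiliser +
  fixes t :: 'a
  assumes t: "t \<in> carrier U"
    and conjugate_t_P: "p \<in> P \<Longrightarrow> conjugate U t p \<in> P"
    and conjugate_inv_t_P: "p \<in> P \<Longrightarrow> conjugate U (inv t) p \<in> P"
    and edge_kernel_trivial: "x \<in> K \<Longrightarrow> conjugate U (inv t) x \<in> K \<Longrightarrow> x = \<one>"
begin

lemma t_carrier [simp]: "t \<in> carrier U" by (rule t)

definition Kt :: "'a set" where "Kt = {x \<in> carrier U. conjugate U (inv t) x \<in> K}"

lemma Kt_carrier: "x \<in> Kt \<Longrightarrow> x \<in> carrier U" unfolding Kt_def by simp

lemma Kt_P:
  assumes x: "x \<in> Kt" shows "x \<in> P"
proof -
  have xc: "x \<in> carrier U" and xK: "conjugate U (inv t) x \<in> K" using x unfolding Kt_def by auto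
  have "conjugate U t (conjugate U (inv t) x) \<in> P" using conjugate_t_P[OF K_P[OF xK]] .
  then show ?thesis using xc by simp
qed

lemma conjugate_t_K: "k \<in> K \<Longrightarrow> conjugate U t k \<in> Kt"
  unfolding Kt_def by simp

text \<open>The commutator of \<open>k\<close> and \<open>x\<close> lies in \<open>K\<close>, and so does its conjugate by \<open>t\<^sup>-\<^sup>1\<close>;
  triviality of the edge kernel forces it to be \<open>\<one>\<close>.\<close>
lemma K_Kt_commute:
  assumes k: "k \<in> K" and x: "x \<in> Kt"
  shows "k \<otimes> x = x \<otimes> k"
proof -
  have kc: "k \<in> carrier U" and xc: "x \<in> carrier U" using k Kt_carrier[OF x] by auto
  have xK: "conjugate U (inv t) x \<in> K" using x unfolding Kt_def by simp
  define z where "z = conjugate U k x \<otimes> inv x"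
  have "z = k \<otimes> conjugate U x (inv k)" unfolding z_def conjugate_def using kc xc by (simp add: m_assoc)
  moreover have "conjugate U x (inv k) \<in> K" using conjugate_K_closed[OF P_H[OF Kt_P[OF x]] inv_K[OF k]] .
  ultimately have zK: "z \<in> K" using k by simp
  have "conjugate U (inv t) z = conjugate U (inv t) (conjugate U k x) \<otimes> inv (conjugate U (inv t) x)"
    unfolding z_def using kc xc by (simp add: conjugate_mult conjugate_inv)
  also have "conjugate U (inv t) (conjugate U k x) = conjugate U (conjugate U (inv t) k) (conjugate U (inv t) x)"
    using kc xc by (intro conjugate_conjugate) simp_all
  finally have z_t: "conjugate U (inv t) z
      = conjugate U (conjugate U (inv t) k) (conjugate U (inv t) x) \<otimes> inv (conjugate U (inv t) x)" .
  have "conjugate U (inv t) k \<in> H" using conjugate_inv_t_P[of k] k by simp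
  then have "conjugate U (conjugate U (inv t) k) (conjugate U (inv t) x) \<in> K"
    using conjugate_K_closed xK by blast
  then have "conjugate U (inv t) z \<in> K" unfolding z_t using xK by simp
  then have "z = \<one>" by (rule edge_kernel_trivial[OF zK])
  then have "conjugate U k x = x" using kc xc unfolding z_def by (simp add: inv_solve_right')
  then show ?thesis using conjugate_eq_self_iff kc xc by simp
qed

lemma Kt_syl_ker: "x \<in> Kt \<Longrightarrow> x \<in> syl_ker"
  using syl_perm_centraliser[OF P_H[OF Kt_P]] K_Kt_commute Kt_P unfolding syl_ker_def by force

end

locale edge_swap_all_even = edge_swap +
  assumes all_even: "h \<in> H \<Longrightarrow> evenperm (syl_perm h)"
begin

definition D :: "'a set" where "D = syl_ker \<inter> P"
definition Dt :: "'a set" where "Dt = {x \<in> carrier U. conjugate U (inv t) x \<in> D}"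
definition E :: "'a set" where "E = D \<inter> Dt"

lemma subgroup_D: "subgroup D U" unfolding D_def by (rule subgroup_Int[OF subgroup_syl_ker P])
lemma subgroup_Dt: "subgroup Dt U" unfolding Dt_def by (rule conjugate_preimage_subgroup[OF subgroup_D]) simp
lemma subgroup_E: "subgroup E U" unfolding E_def by (rule subgroup_Int[OF subgroup_D subgroup_Dt])

lemma D_P: "d \<in> D \<Longrightarrow> d \<in> P" unfolding D_def by simp
lemma D_syl_ker: "d \<in> D \<Longrightarrow> d \<in> syl_ker" unfolding D_def by simp
lemma Dt_carrier: "d \<in> Dt \<Longrightarrow> d \<in> carrier U" unfolding Dt_def by simp

lemma Dt_P:
  assumes x: "x \<in> Dt" shows "x \<in> P"
proof -
  have xc: "x \<in> carrier U" and xD: "conjugate U (inv t) x \<in> D" using x unfolding Dt_def by auto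
  have "conjugate U t (conjugate U (inv t) x) \<in> P" using conjugate_t_P[OF D_P[OF xD]] .
  then show ?thesis using xc by simp
qed

lemma Kt_D: "x \<in> Kt \<Longrightarrow> x \<in> D" unfolding D_def using Kt_syl_ker Kt_P by simp

lemma K_Dt:
  assumes k: "k \<in> K" shows "k \<in> Dt"
proof -
  have kc: "k \<in> carrier U" using k by simp
  define y where "y = conjugate U (inv t) k"
  have yP: "y \<in> P" unfolding y_def using conjugate_inv_t_P K_P[OF k] .
  have "y \<otimes> k' = k' \<otimes> y" if k': "k' \<in> K" for k'
  proof -
    have k'c: "k' \<in> carrier U" using k' by simp
    have "k \<otimes> conjugate U t k' = conjugate U t k' \<otimes> k" using K_Kt_commute[OF k conjugate_t_K[OF k']] .
    then have "conjugate U (inv t) k \<otimes> conjugate U (inv t) (conjugate U t k')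
        = conjugate U (inv t) (conjugate U t k') \<otimes> conjugate U (inv t) k"
      using conjugate_commute[of "inv t" k "conjugate U t k'"] kc k'c by simp
    then show ?thesis unfolding y_def using k'c by simp
  qed
  then have "syl_perm y = id" using syl_perm_centraliser[OF P_H[OF yP]] by blast
  then have "y \<in> D" unfolding D_def syl_ker_def using yP by simp
  then show ?thesis unfolding Dt_def y_def using kc by simp
qed

lemma P_decomp:
  assumes p: "p \<in> P" shows "\<exists>k\<in>K. \<exists>d\<in>D. p = k \<otimes> d"
proof -
  obtain k c where kc: "k \<in> K" "c \<in> syl_ker" "p = k \<otimes> c"
    using even_syl_perm_iff[OF P_H[OF p]] all_even[OF P_H[OF p]] by blast
  have "c = inv k \<otimes> p" using kc(1,3) syl_ker_H[OF kc(2)] by simp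
  then have "c \<in> P" using kc(1) p by simp
  then show ?thesis using kc unfolding D_def by blast
qed

lemma finite_D: "finite D" using finite_subset[OF _ finite_syl_ker] unfolding D_def by blast
lemma finite_E: "finite E" unfolding E_def using finite_D by simp

lemma K_Int_D: "K \<inter> D = {\<one>}"
  using K_Int_syl_ker subgroup.one_closed[OF subgroup_D] unfolding D_def by blast

lemma K_Int_E: "K \<inter> E = {\<one>}"
  using K_Int_D subgroup.one_closed[OF subgroup_E] unfolding E_def by blast

lemma card_D: "card D = 24"
proof -
  have "P = {k \<otimes> d | k d. k \<in> K \<and> d \<in> D}" using P_decomp D_P by fastforce
  then have "card P = card K * card D"
    using card_mult_of_trivial_Int[OF subgroup_K subgroup_D K_Int_D finite_K finite_D] by simp
  then show ?thesis using card_P card_K by simp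
qed

lemma Dt_eq: "Dt = conjugate U t ` D"
proof
  show "Dt \<subseteq> conjugate U t ` D"
  proof
    fix x assume x: "x \<in> Dt"
    then have "x = conjugate U t (conjugate U (inv t) x)" using Dt_carrier by simp
    then show "x \<in> conjugate U t ` D" using x unfolding Dt_def by blast
  qed
  show "conjugate U t ` D \<subseteq> Dt" unfolding Dt_def using D_P by auto
qed

lemma card_Dt: "card Dt = 24"
proof -
  have "inj_on (conjugate U t) D"
    by (rule inj_onI) (use conjugate_inj[OF t_carrier] D_P P_carrier in blast)
  then show ?thesis unfolding Dt_eq using card_D by (simp add: card_image)
qed

lemma card_E: "card E = 2"
proof -
  have "Dt = {k \<otimes> e | k e. k \<in> K \<and> e \<in> E}"
  proof
    show "Dt \<subseteq> {k \<otimes> e | k e. k \<in> K \<and> e \<in> E}"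
    proof
      fix x assume x: "x \<in> Dt"
      obtain k d where kd: "k \<in> K" "d \<in> D" "x = k \<otimes> d" using P_decomp[OF Dt_P[OF x]] by blast
      have "d = inv k \<otimes> x" using kd D_P by simp
      moreover have "inv k \<otimes> x \<in> Dt"
        using subgroup.m_closed[OF subgroup_Dt subgroup.m_inv_closed[OF subgroup_Dt K_Dt[OF kd(1)]] x] .
      ultimately have "d \<in> E" unfolding E_def using kd by simp
      then show "x \<in> {k \<otimes> e | k e. k \<in> K \<and> e \<in> E}" using kd by blast
    qed
    show "{k \<otimes> e | k e. k \<in> K \<and> e \<in> E} \<subseteq> Dt"
      using subgroup.m_closed[OF subgroup_Dt K_Dt] unfolding E_def by blast
  qed
  then have "card Dt = card K * card E"
    using card_mult_of_trivial_Int[OF subgroup_K subgroup_E K_Int_E finite_K finite_E] by simp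
  then show ?thesis using card_Dt card_K by simp
qed

lemma D_decomp:
  assumes d: "d \<in> D" shows "\<exists>x\<in>Kt. \<exists>e\<in>E. d = x \<otimes> e"
proof -
  have dc: "d \<in> carrier U" using D_P[OF d] by simp
  obtain k c where kc: "k \<in> K" "c \<in> D" "conjugate U (inv t) d = k \<otimes> c"
    using P_decomp[OF conjugate_inv_t_P[OF D_P[OF d]]] by blast
  have kcc: "k \<in> carrier U" "c \<in> carrier U" using kc D_P by auto
  have "d = conjugate U t (conjugate U (inv t) d)" using dc by simp
  also have "\<dots> = conjugate U t k \<otimes> conjugate U t c" using kc(3) kcc by (simp add: conjugate_mult)
  finally have de: "d = conjugate U t k \<otimes> conjugate U t c" .
  have x: "conjugate U t k \<in> Kt" using conjugate_t_K[OF kc(1)] .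
  have "conjugate U t c = inv (conjugate U t k) \<otimes> d" using de kcc by simp
  moreover have "inv (conjugate U t k) \<otimes> d \<in> D"
    using subgroup.m_closed[OF subgroup_D subgroup.m_inv_closed[OF subgroup_D Kt_D[OF x]] d] .
  moreover have "conjugate U t c \<in> Dt" unfolding Dt_def using kcc kc(2) by simp
  ultimately have "conjugate U t c \<in> E" unfolding E_def by simp
  then show ?thesis using x de by blast
qed

lemma E_central_in_P:
  assumes e: "e \<in> E" and p: "p \<in> P"
  shows "e \<otimes> p = p \<otimes> e"
proof -
  have eD: "e \<in> D" and eDt: "e \<in> Dt" using e unfolding E_def by auto
  have ec: "e \<in> carrier U" using D_P[OF eD] by simp
  obtain k d where kd: "k \<in> K" "d \<in> D" "p = k \<otimes> d" using P_decomp[OF p] by blast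
  obtain x e' where xe: "x \<in> Kt" "e' \<in> E" "d = x \<otimes> e'" using D_decomp[OF kd(2)] by blast
  have kc: "k \<in> carrier U" and xc: "x \<in> carrier U" and dc: "d \<in> carrier U"
    using kd Kt_carrier[OF xe(1)] D_P[OF kd(2)] by auto
  have e'c: "e' \<in> carrier U" using xe(2) subgroup.subset[OF subgroup_E] by blast
  have "e \<otimes> k = k \<otimes> e" using syl_ker_commutes[OF D_syl_ker[OF eD] kd(1)] .
  moreover have "e \<otimes> x = x \<otimes> e"
  proof -
    have "conjugate U (inv t) e \<in> syl_ker" "conjugate U (inv t) x \<in> K"
      using eDt xe(1) D_syl_ker unfolding Dt_def Kt_def by auto
    then have "conjugate U (inv t) e \<otimes> conjugate U (inv t) x = conjugate U (inv t) x \<otimes> conjugate U (inv t) e"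
      by (rule syl_ker_commutes)
    then have "conjugate U t (conjugate U (inv t) e) \<otimes> conjugate U t (conjugate U (inv t) x)
        = conjugate U t (conjugate U (inv t) x) \<otimes> conjugate U t (conjugate U (inv t) e)"
      using conjugate_commute[of t "conjugate U (inv t) e" "conjugate U (inv t) x"] ec xc by simp
    then show ?thesis using ec xc by simp
  qed
  moreover have "e \<otimes> e' = e' \<otimes> e"
  proof -
    text \<open>\<open>E\<close> has order two, so it is abelian.\<close>
    have "E = {\<one>, e} \<or> e = \<one>"
      using card_E e subgroup.one_closed[OF subgroup_E] card_subset_eq[OF finite_E, of "{\<one>, e}"]
      by (cases "e = \<one>") auto
    then show ?thesis using xe(2) ec e'c by auto
  qed
  ultimately show ?thesis unfolding kd(3) xe(3)
    using commute_mult[OF ec kc dc] commute_mult[OF ec xc e'c] xe(3) by simp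
qed

lemma contradiction: False
proof -
  have "E \<noteq> {\<one>}" using card_E by auto
  then obtain e where e: "e \<in> E" "e \<noteq> \<one>" using subgroup.one_closed[OF subgroup_E] by blast
  have eP: "e \<in> P" and eH: "e \<in> H" using e D_P unfolding E_def by auto
  have "nbr_perm e \<circ> \<sigma> = \<sigma> \<circ> nbr_perm e" if s: "\<sigma> permutes {1..5}" "\<sigma> 1 = 1" for \<sigma>
  proof -
    obtain h where h: "h \<in> H" "nbr_perm h = \<sigma>" using nbr_perm_surj[OF s(1)] by blast
    then have "h \<in> P" using nbr_perm_fixes_1_iff s(2) by blast
    then have "nbr_perm (e \<otimes> h) = nbr_perm (h \<otimes> e)" using E_central_in_P[OF e(1)] by simp
    then show ?thesis using nbr_perm_mult eH h by simp
  qed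
  then have "nbr_perm e = id"
    using sym_point_stab_centraliser_trivial[of 5] nbr_perm_permutes[OF eH] nbr_perm_fixes_1_iff[OF eH] eP
    by simp
  then have "e \<in> K \<inter> syl_ker" using nbr_perm_eq_id_iff[OF eH] e D_syl_ker unfolding E_def by simp
  then show False using K_Int_syl_ker e(2) by blast
qed

end

context edge_swap
begin

lemma odd_syl_perm_exists: "\<exists>h\<in>H. \<not> evenperm (syl_perm h)"
proof (rule ccontr)
  assume "\<not> ?thesis"
  then interpret edge_swap_all_even U H P K j t by unfold_locales blast
  show False by (rule contradiction)
qed

lemma evenperm_nbr_perm_syl_perm: "h \<in> H \<Longrightarrow> evenperm (nbr_perm h) = evenperm (syl_perm h)"
  using odd_syl_perm_exists evenperm_compat_if_odd by blast

definition box_map :: "'a \<Rightarrow> (nat \<Rightarrow> nat) \<times> (nat \<Rightarrow> nat)" where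
  "box_map h = (nbr_perm h, syl_perm h)"

lemma box_map_mem: "h \<in> H \<Longrightarrow> box_map h \<in> carrier (box_prod 5 4)"
  using nbr_perm_permutes syl_perm_permutes evenperm_nbr_perm_syl_perm
  by (simp add: box_map_def box_prod_def sign_def)

lemma box_map_hom: "box_map \<in> hom (U\<lparr>carrier := H\<rparr>) (box_prod 5 4)"
  unfolding hom_def using box_map_mem
  by (auto simp: box_map_def box_prod_def DirProd_def sym_group_def nbr_perm_mult syl_perm_mult)

lemma box_map_inj: "inj_on box_map H"
proof (rule inj_onI)
  fix x y assume x: "x \<in> H" and y: "y \<in> H" and e: "box_map x = box_map y"
  then have "x \<otimes> inv y \<in> K" and "syl_perm (x \<otimes> inv y) = id"
    using nbr_perm_eq_iff perm_hom_eq_iff[where \<phi> = syl_perm, OF H syl_perm_mult syl_perm_permutes]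
    by (simp_all add: box_map_def)
  then have "x \<otimes> inv y \<in> K \<inter> syl_ker" using x y unfolding syl_ker_def by simp
  then have "x \<otimes> inv y = \<one>" using K_Int_syl_ker by blast
  moreover have "x = (x \<otimes> inv y) \<otimes> y" using x y by (simp add: m_assoc)
  ultimately show "x = y" using y by simp
qed

theorem vertex_stabiliser_iso_box_prod: "U\<lparr>carrier := H\<rparr> \<cong> box_prod 5 4"
proof -
  have "card (box_map ` H) = card (carrier (box_prod 5 4))"
    using card_image[OF box_map_inj] card_H card_box_prod[of 5 4] by (simp add: fact_numeral)
  moreover have "finite (carrier (box_prod 5 4))"
    using card_box_prod[of 5 4] by (intro card_ge_0_finite) (simp add: fact_numeral)
  ultimately have "box_map ` H = carrier (box_prod 5 4)"
    using card_subset_eq box_map_mem by (metis image_subsetI)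
  then have "box_map \<in> iso (U\<lparr>carrier := H\<rparr>) (box_prod 5 4)"
    using box_map_hom box_map_inj by (simp add: iso_def bij_betw_def)
  then show ?thesis unfolding is_iso_def by blast
qed

end

context group
begin

lemma amalgam_subgroup_Gxy: "amalgam_5_2 G Gx Ge Gxy \<Longrightarrow> subgroup Gxy G"
  unfolding amalgam_5_2_def using subgroup_Int by blast

lemma amalgam_swap_element:
  assumes am: "amalgam_5_2 G Gx Ge Gxy"
  shows "(SOME t. t \<in> Ge - Gxy) \<in> Ge - Gxy"
proof -
  have Ge: "subgroup Ge G" and Gxy: "Gxy \<subseteq> Ge"
    and index2: "card (rcosets\<^bsub>G\<lparr>carrier := Ge\<rparr>\<^esub> Gxy) = 2"
    using am unfolding amalgam_5_2_def by auto
  have "Ge \<noteq> Gxy"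
  proof
    assume "Ge = Gxy"
    then have "rcosets\<^bsub>G\<lparr>carrier := Ge\<rparr>\<^esub> Gxy \<subseteq> {Gxy}"
      unfolding RCOSETS_def using coset_join2[OF _ amalgam_subgroup_Gxy[OF am]] subgroup.subset[OF Ge]
      by auto
    then have "card (rcosets\<^bsub>G\<lparr>carrier := Ge\<rparr>\<^esub> Gxy) \<le> 1" using card_mono[of "{Gxy}"] by simp
    then show False using index2 by simp
  qed
  then have "\<exists>t. t \<in> Ge - Gxy" using Gxy by blast
  then show ?thesis by (rule someI_ex)
qed

lemma amalgam_conjugate_closed:
  assumes am: "amalgam_5_2 G Gx Ge Gxy" and "g \<in> Ge" "p \<in> Gxy"
  shows "conjugate G g p \<in> Gxy"
  using assms index_two_subgroup_conjugate_closed[OF amalgam_subgroup_Gxy[OF am]]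
  unfolding amalgam_5_2_def by blast

lemma amalgam_edge_kernel_trivial:
  assumes am: "amalgam_5_2 G Gx Ge Gxy" and edge: "edge_kernel G Gx Ge Gxy = {\<one>}"
    and t: "t = (SOME t. t \<in> Ge - Gxy)"
    and x: "x \<in> vertex_kernel G Gx Gxy" "conjugate G (inv t) x \<in> vertex_kernel G Gx Gxy"
  shows "x = \<one>"
proof -
  have Gx: "subgroup Gx G" and Ge: "subgroup Ge G" using am unfolding amalgam_5_2_def by auto
  have tGe: "t \<in> Ge" using amalgam_swap_element[OF am] t by simp
  have "x \<in> normal_core G (stab_y G Gx Ge Gxy) Gxy"
    unfolding stab_y_def t[symmetric] using x amalgam_conjugate_closed[OF am tGe] subgroup.subset[OF Ge] tGe
    unfolding vertex_kernel_def
    by (intro normal_core_conj_set[OF Gx subgroup.subset[OF amalgam_subgroup_Gxy[OF am]]]) auto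
  then have "x \<in> edge_kernel G Gx Ge Gxy" using x unfolding edge_kernel_def by simp
  then show ?thesis using edge by simp
qed

lemma amalgam_edge_swap:
  assumes am: "amalgam_5_2 G Gx Ge Gxy"
    and edge: "edge_kernel G Gx Ge Gxy = {\<one>}"
    and quot: "G\<lparr>carrier := Gx\<rparr> Mod vertex_kernel G Gx Gxy \<cong> sym_group 5"
    and ker: "G\<lparr>carrier := vertex_kernel G Gx Gxy\<rparr> \<cong> alt_group 4"
  shows "\<exists>j t. edge_swap G Gx Gxy (vertex_kernel G Gx Gxy) j t"
proof -
  define K where "K = vertex_kernel G Gx Gxy"
  define t where "t = (SOME t. t \<in> Ge - Gxy)"
  obtain j where j: "j \<in> iso (G\<lparr>carrier := K\<rparr>) (alt_group 4)" using ker unfolding is_iso_def K_def by blast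
  have index120: "card (rcosets\<^bsub>G\<lparr>carrier := Gx\<rparr>\<^esub> K) = 120"
    using iso_same_card[OF quot] sym_group_card_carrier[of 5] unfolding K_def
    by (simp add: FactGroup_def fact_numeral)
  have tGe: "t \<in> Ge" and tinv: "inv t \<in> Ge"
    using amalgam_swap_element[OF am] am unfolding t_def amalgam_5_2_def by (auto intro: subgroup.m_inv_closed)
  have "K = normal_core G Gx Gxy" unfolding K_def vertex_kernel_def ..
  then have "vertex_stabiliser G Gx Gxy K j"
    using am j index120 amalgam_subgroup_Gxy[OF am] unfolding amalgam_5_2_def
    by (intro vertex_stabiliser.intro vertex_stabiliser_axioms.intro is_group) auto
  moreover have "edge_swap_axioms G Gxy K t"
    using amalgam_conjugate_closed[OF am] amalgam_edge_kernel_trivial[OF am edge t_def] tGe tinv am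
    unfolding K_def amalgam_5_2_def by (intro edge_swap_axioms.intro) (auto intro: subgroup.mem_carrier)
  ultimately have "edge_swap G Gx Gxy K j t" by (rule edge_swap.intro)
  then show ?thesis unfolding K_def by blast
qed

end

theorem mainTheorem14:
  fixes U :: "('a, 'b) monoid_scheme" and Gx Ge Gxy :: "'a set"
  assumes "amalgam_5_2 U Gx Ge Gxy"
    and "primitive_amalgam U Gx Ge Gxy"
    and "edge_kernel U Gx Ge Gxy = {\<one>\<^bsub>U\<^esub>}"
    and "U\<lparr>carrier := Gx\<rparr> Mod vertex_kernel U Gx Gxy \<cong> sym_group 5"
    and "U\<lparr>carrier := vertex_kernel U Gx Gxy\<rparr> \<cong> alt_group 4"
  shows "U\<lparr>carrier := Gx\<rparr> \<cong> box_prod 5 4"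
proof -
  have "group U" using assms(1) unfolding amalgam_5_2_def by simp
  then obtain j t where "edge_swap U Gx Gxy (vertex_kernel U Gx Gxy) j t"
    using group.amalgam_edge_swap[OF _ assms(1,3,4,5)] by blast
  then show ?thesis by (rule edge_swap.vertex_stabiliser_iso_box_prod)
qed

end
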